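(* Over $\mathsf{G}_{r,n}$, the tuple of (set-valued) statistics $$\bigl(\ell,\mathsf{Rmil}^0,\mathsf{Rmil}^1,\dots,\mathsf{Rmil}^{r-1},\mathsf{Lmil}^0,\dots,\mathsf{Lmil}^{r-1},\mathsf{Lmal}^0,\dots,\mathsf{Lmal}^{r-1},\mathsf{Lmap}^0,\dots,\mathsf{Lmap}^{r-1}\bigr)$$ and the tuple $$\bigl(\mathsf{sor},\mathsf{Cyc}^0,\mathsf{Cyc}^{r-1},\dots,\mathsf{Cyc}^{1},\mathsf{Lmic}^0,\mathsf{Lmic}^{r-1},\dots,\mathsf{Lmic}^1,\mathsf{Lmal}^0,\mathsf{Lmal}^{r-1},\dots,\mathsf{Lmal}^1,\mathsf{Lmap}^0,\mathsf{Lmap}^{r-1},\dots,\mathsf{Lmap}^1\bigr)$$ have the same joint distribution: for every possible value $v$, the number of $\pi\in\mathsf{G}_{r,n}$ at which the first tuple equals $v$ equals the number of $\pi\in\mathsf{G}_{r,n}$ at which the second tuple equals $v$.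
   Context: $\mathsf{G}_{r,n}=C_r\wr\mathfrak S_n$: pairs $(\sigma,\mathbf z)$, $\sigma\in\mathfrak S_n$, $\mathbf z\in(\mathbb Z/r)^n$, written $\pi=\sigma_1^{[z_1]}\cdots\sigma_n^{[z_n]}$ (colors in $\{0,\dots,r-1\}$, read mod $r$); product $(\sigma,\mathbf z)(\rho,\mathbf w)=(\sigma\rho,\mathbf w+\rho(\mathbf z))$ with $\rho(\mathbf z)=(z_{\rho(1)},\dots,z_{\rho(n)})$; $\pi$ acts on $\{i^{[t]}\}$ by $\pi(i^{[t]})=\sigma_i^{[z_i+t]}$, $i^{[0]}=i$. $\ell(\pi)$: minimal number of factors in an expression of $\pi$ as a product of $s_0=1^{[1]}2\cdots n$ and $s_i$ ($1\le i<n$: base permutation $(i\ i+1)$, all colors $0$). $\mathsf{sor}(\pi)$ (sorting index): set $\pi^{(n)}=\pi$; for $j=n,\dots,1$ let $c_j$ be the position of the letter with base value $j$ in the length-$j$ word $\pi^{(j)}=\tau_1^{[y_1]}\cdots\tau_j^{[y_j]}$, $z$ its color, $e_j\in\{0,\dots,r-1\}$ with $e_j\equiv-z$; if $c_j<j$, $\pi^{(j-1)}$ is obtained by replacing the letter at position $c_j$ by $\tau_j^{[y_j-e_j]}$ and deleting the last letter; if $c_j=j$ it is obtained by deleting the last letter. Then $\mathsf{sor}(\pi)=\sum_j\bigl(j-c_j+\chi(e_j>0)(2(c_j-1)+e_j)\bigr)$, $\chi$ the indicator. Statistics: $\mathsf{Rmil}(\pi)=\{\sigma_i^{[z_i]}:\sigma_i<\sigma_j\,\forall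 j>i\}$, $\mathsf{Lmil}(\pi)=\{\sigma_i^{[z_i]}:\sigma_i<\sigma_j\,\forall j<i\}$, $\mathsf{Lmal}(\pi)=\{\sigma_i^{[z_i]}:\sigma_i>\sigma_j\,\forall j<i\}$, $\mathsf{Lmap}(\pi)=\{i^{[z_i]}:\sigma_i>\sigma_j\,\forall j<i\}$; $\mathsf{Cyc}(\pi)$ = set of $\alpha^{[c]}$ over cycles of $\sigma$ with element set $B$, $\alpha=\min B$, $c\equiv\sum_{k\in B}z_k\pmod r$; $\mathsf{Lmic}(\pi)$ = set of letters of the word $\pi(1)\pi^2(1)\cdots\pi^m(1)$ ($m\ge1$ least with $\pi^m(1)=1$) whose base value is smaller than the base values of all earlier letters. For a set $S$ of colored letters, $S^t=\{k:k^{[t]}\in S\}$. *)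

theory Defs
  imports "HOL-Combinatorics.Permutations"
begin

text \<open>An element of G(r,n) = C_r wr S_n is a pair (sigma, z): sigma a permutation of
  {1..n} (identity outside), z the colour vector with z i in {0..r-1} for i in {1..n}
  and z i = 0 outside {1..n}.  Letters (coloured values) are pairs (value, colour).\<close>

type_synonym cperm = "(nat \<Rightarrow> nat) \<times> (nat \<Rightarrow> nat)"

definition G :: "nat \<Rightarrow> nat \<Rightarrow> cperm set" where
  "G r n = {(\<sigma>, z). \<sigma> permutes {1..n} \<and> (\<forall>i. z i < r) \<and> (\<forall>i. i \<notin> {1..n} \<longrightarrow> z i = 0)}"

definition cmult :: "nat \<Rightarrow> cperm \<Rightarrow> cperm \<Rightarrow> cperm" where
  "cmult r p q = (fst p \<circ> fst q, \<lambda>i. (snd q i + snd p (fst q i)) mod r)"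

definition cone :: cperm where
  "cone = (id, \<lambda>_. 0)"

definition gen0 :: "nat \<Rightarrow> cperm" where
  "gen0 r = (id, \<lambda>i. if i = 1 then 1 mod r else 0)"

definition geni :: "nat \<Rightarrow> cperm" where
  "geni i = ((\<lambda>x. if x = i then i + 1 else if x = i + 1 then i else x), \<lambda>_. 0)"

definition gens :: "nat \<Rightarrow> nat \<Rightarrow> cperm set" where
  "gens r n = (if 1 \<le> n then {gen0 r} else {}) \<union> {geni i | i. 1 \<le> i \<and> i < n}"

definition clength :: "nat \<Rightarrow> nat \<Rightarrow> cperm \<Rightarrow> nat" where
  "clength r n p = (LEAST k. \<exists>ws. length ws = k \<and> set ws \<subseteq> gens r n \<and> foldr (cmult r) ws cone = p)"

text \<open>Sorting index.  sor_aux r j tau y processes the word tau_1^[y_1] ... tau_j^[y_j].\<close>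
fun sor_aux :: "nat \<Rightarrow> nat \<Rightarrow> (nat \<Rightarrow> nat) \<Rightarrow> (nat \<Rightarrow> nat) \<Rightarrow> nat" where
  "sor_aux r 0 \<tau> y = 0"
| "sor_aux r (Suc j') \<tau> y =
     (let j = Suc j';
          c = (THE c. c \<in> {1..j} \<and> \<tau> c = j);
          e = (r - y c mod r) mod r;
          \<tau>' = (if c < j then \<tau>(c := \<tau> j) else \<tau>);
          y' = (if c < j then y(c := (y j + r - e) mod r) else y)
      in (j - c + (if e > 0 then 2 * (c - 1) + e else 0)) + sor_aux r j' \<tau>' y')"

definition sor :: "nat \<Rightarrow> nat \<Rightarrow> cperm \<Rightarrow> nat" where
  "sor r n p = sor_aux r n (fst p) (snd p)"

definition Rmil :: "nat \<Rightarrow> cperm \<Rightarrow> (nat \<times> nat) set" where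
  "Rmil n p = {(fst p i, snd p i) | i. i \<in> {1..n} \<and> (\<forall>j \<in> {i<..n}. fst p i < fst p j)}"

definition Lmil :: "nat \<Rightarrow> cperm \<Rightarrow> (nat \<times> nat) set" where
  "Lmil n p = {(fst p i, snd p i) | i. i \<in> {1..n} \<and> (\<forall>j \<in> {1..<i}. fst p i < fst p j)}"

definition Lmal :: "nat \<Rightarrow> cperm \<Rightarrow> (nat \<times> nat) set" where
  "Lmal n p = {(fst p i, snd p i) | i. i \<in> {1..n} \<and> (\<forall>j \<in> {1..<i}. fst p i > fst p j)}"

definition Lmap :: "nat \<Rightarrow> cperm \<Rightarrow> (nat \<times> nat) set" where
  "Lmap n p = {(i, snd p i) | i. i \<in> {1..n} \<and> (\<forall>j \<in> {1..<i}. fst p i > fst p j)}"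

definition corbit :: "(nat \<Rightarrow> nat) \<Rightarrow> nat \<Rightarrow> nat set" where
  "corbit \<sigma> i = {(\<sigma> ^^ k) i | k. True}"

definition Cyc :: "nat \<Rightarrow> nat \<Rightarrow> cperm \<Rightarrow> (nat \<times> nat) set" where
  "Cyc r n p = {(Min (corbit (fst p) i), (\<Sum>k \<in> corbit (fst p) i. snd p k) mod r) | i. i \<in> {1..n}}"

definition cact :: "nat \<Rightarrow> cperm \<Rightarrow> nat \<times> nat \<Rightarrow> nat \<times> nat" where
  "cact r p a = (fst p (fst a), (snd p (fst a) + snd a) mod r)"

definition Lmic :: "nat \<Rightarrow> cperm \<Rightarrow> (nat \<times> nat) set" where
  "Lmic r p =
     (let m = (LEAST m. 1 \<le> m \<and> (cact r p ^^ m) (1, 0) = (1, 0))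
      in {(cact r p ^^ k) (1, 0) | k. 1 \<le> k \<and> k \<le> m \<and>
            (\<forall>l. 1 \<le> l \<and> l < k \<longrightarrow> fst ((cact r p ^^ k) (1, 0)) < fst ((cact r p ^^ l) (1, 0)))})"

definition colsec :: "(nat \<times> nat) set \<Rightarrow> nat \<Rightarrow> nat set" where
  "colsec S t = {k. (k, t) \<in> S}"

end

theory Submission
  imports Defs "HOL-Combinatorics.Orbits"
begin

text \<open>Both tuples are computed by removing the largest letter \<open>n\<close>. If it is \<open>n\<^sup>[z\<^sup>]\<close> at
  position \<open>c\<close>, deleting it and closing the gap lowers the length by \<open>n - c\<close> (for \<open>z = 0\<close>) or
  \<open>c - 1 + n + z - 1\<close> (otherwise), and changes \<open>Rmil\<close>, \<open>Lmil\<close> and the left-to-right maxima only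
  by the letter \<open>n\<^sup>[z\<^sup>]\<close> itself. The first step of the sorting algorithm applied to a word with
  \<open>n\<^sup>[-z\<^sup>]\<close> at position \<open>c\<close> costs the same amount and changes \<open>Cyc\<close>, \<open>Lmic\<close> and the
  left-to-right maxima in the same way, with the colour negated. Recursively this yields a
  bijection \<open>Phi\<close> of \<open>G(r, n)\<close> carrying the first tuple to the second. The length itself is
  identified with an inversion count: every generator changes that count by at most one, and every
  element other than the identity has a generator lowering it by exactly one.\<close>

lemma G_memD:
  assumes "p \<in> G r n"
  shows "fst p permutes {1..n}" "\<And>i. snd p i < r" "\<And>i. i \<notin> {1..n} \<Longrightarrow> snd p i = 0"
  using assms by (auto simp: G_def split: prod.splits)

lemma G_memI:
  assumes "fst p permutes {1..n}" "\<And>i. snd p i < r" "\<And>i. i \<notin> {1..n} \<Longrightarrow> snd p i = 0"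
  shows "p \<in> G r n"
  using assms by (cases p) (auto simp: G_def)

lemma permutes_eq_iff: "\<sigma> permutes S \<Longrightarrow> \<sigma> a = \<sigma> b \<longleftrightarrow> a = b"
  by (metis permutes_inj injD)

lemma permutes_preimage:
  assumes "\<sigma> permutes S" "v \<in> S"
  shows "inv \<sigma> v \<in> S" "\<sigma> (inv \<sigma> v) = v"
  using assms permutes_inverses(1)[OF assms(1)] permutes_in_image[OF permutes_inv[OF assms(1)]]
  by auto

lemma G_zero: "p \<in> G r 0 \<Longrightarrow> p = cone"
  by (cases p) (auto simp: G_def cone_def fun_eq_iff permutes_not_in)

lemma cone_in_G: "1 \<le> r \<Longrightarrow> cone \<in> G r n"
  by (auto simp: G_def cone_def permutes_id)

lemma cmult_in_G:
  assumes "p \<in> G r n" "q \<in> G r n" "1 \<le> r"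
  shows "cmult r p q \<in> G r n"
proof (rule G_memI)
  show "fst (cmult r p q) permutes {1..n}"
    using G_memD(1)[OF assms(1)] G_memD(1)[OF assms(2)] by (simp add: cmult_def permutes_compose)
  show "snd (cmult r p q) i < r" for i
    using assms(3) by (simp add: cmult_def)
  show "snd (cmult r p q) i = 0" if "i \<notin> {1..n}" for i
    using that G_memD[OF assms(1)] G_memD[OF assms(2)] permutes_not_in[OF G_memD(1)[OF assms(2)] that]
    by (simp add: cmult_def)
qed

lemma geni_eq: "geni i = (Transposition.transpose i (Suc i), \<lambda>_. 0)"
  by (simp add: geni_def Transposition.transpose_def fun_eq_iff)

lemma gens_cases:
  assumes "g \<in> gens r n"
  obtains "g = gen0 r" "1 \<le> n" | i where "g = geni i" "1 \<le> i" "i < n"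
  using assms by (auto simp: gens_def split: if_splits)

lemma gens_in_G:
  assumes "1 \<le> r" "g \<in> gens r n"
  shows "g \<in> G r n"
  using assms(2)
proof (cases rule: gens_cases)
  case 1
  then show ?thesis using assms(1) by (auto simp: gen0_def G_def permutes_id)
next
  case (2 i)
  then have "Transposition.transpose i (Suc i) permutes {1..n}"
    by (intro permutes_swap_id) auto
  then show ?thesis using 2 assms(1) by (simp add: geni_eq G_def)
qed

lemma foldr_cmult_in_G:
  assumes "1 \<le> r" "set ws \<subseteq> gens r n"
  shows "foldr (cmult r) ws cone \<in> G r n"
  using assms(2) by (induction ws) (auto intro: cmult_in_G gens_in_G cone_in_G assms(1))

lemma cmult_geni:
  assumes "p \<in> G r n"
  shows "cmult r (geni i) p = (Transposition.transpose i (Suc i) \<circ> fst p, snd p)"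
  using G_memD(2)[OF assms] by (auto simp: cmult_def geni_eq)

lemma cmult_gen0:
  assumes "p \<in> G r n"
  shows "cmult r (gen0 r) p = (fst p, \<lambda>k. if fst p k = 1 then (snd p k + 1) mod r else snd p k)"
  using G_memD(2)[OF assms] by (auto simp: cmult_def gen0_def mod_add_right_eq)

section \<open>The Coxeter length as an inversion count\<close>

text \<open>A letter \<open>v\<^sup>[t\<^sup>]\<close> is ordered by its signed value \<open>v\<close> (if \<open>t = 0\<close>) or \<open>-v\<close> (if \<open>t > 0\<close>);
  the length counts inversions of this order plus \<open>v + t - 1\<close> for every coloured letter.\<close>

definition signed :: "nat \<Rightarrow> nat \<Rightarrow> int" where
  "signed t v = (if t = 0 then int v else - int v)"

definition signed_letter :: "cperm \<Rightarrow> nat \<Rightarrow> int" where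
  "signed_letter p a = signed (snd p a) (fst p a)"

definition inversions :: "nat \<Rightarrow> cperm \<Rightarrow> (nat \<times> nat) set" where
  "inversions n p = {(a, b). a \<in> {1..n} \<and> b \<in> {1..n} \<and> a < b \<and> signed_letter p b < signed_letter p a}"

definition colour_cost :: "cperm \<Rightarrow> nat \<Rightarrow> nat" where
  "colour_cost p a = (if snd p a = 0 then 0 else fst p a + snd p a - 1)"

definition invlen :: "nat \<Rightarrow> cperm \<Rightarrow> nat" where
  "invlen n p = card (inversions n p) + (\<Sum>a\<in>{1..n}. colour_cost p a)"

lemma finite_inversions: "finite (inversions n p)"
  by (rule finite_subset[of _ "{1..n} \<times> {1..n}"]) (auto simp: inversions_def)

lemma invlen_cone: "invlen n cone = 0"
proof -
  have "inversions n cone = {}" by (auto simp: inversions_def cone_def signed_letter_def signed_def)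
  then show ?thesis by (simp add: invlen_def colour_cost_def cone_def)
qed

text \<open>\<open>left_descent n i p\<close>: the letters with values \<open>i\<close> and \<open>i + 1\<close> form an inversion,
  i.e. left multiplication by \<open>s\<^sub>i\<close> shortens \<open>p\<close>.\<close>

definition left_descent :: "nat \<Rightarrow> nat \<Rightarrow> cperm \<Rightarrow> bool" where
  "left_descent n i p = (\<exists>a b. a \<in> {1..n} \<and> b \<in> {1..n} \<and> fst p a = i \<and> fst p b = Suc i \<and>
     ((snd p a = 0 \<and> snd p b = 0 \<and> b < a) \<or> (snd p a = 0 \<and> snd p b > 0) \<or>
      (snd p a > 0 \<and> snd p b > 0 \<and> a < b)))"

lemma signed_transpose_less_iff:
  assumes "1 \<le> i" "1 \<le> u" "1 \<le> v" "\<not> (u = i \<and> v = Suc i)" "\<not> (u = Suc i \<and> v = i)"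
  shows "signed c (Transposition.transpose i (Suc i) v) < signed d (Transposition.transpose i (Suc i) u)
     \<longleftrightarrow> signed c v < signed d u"
  using assms unfolding signed_def Transposition.transpose_def
  by (cases "c = 0"; cases "d = 0"; cases "u = i"; cases "u = Suc i"; cases "v = i"; cases "v = Suc i") auto

lemma sum_remove_two:
  assumes "finite A" "a \<in> A" "b \<in> A" "a \<noteq> b"
  shows "sum f A = f a + f b + sum f (A - {a, b})"
proof -
  have "sum f A = f a + sum f (A - {a})" using assms by (simp add: sum.remove)
  also have "sum f (A - {a}) = f b + sum f (A - {a} - {b})" using assms by (intro sum.remove) auto
  finally show ?thesis by (simp add: insert_commute Diff_insert2[symmetric] algebra_simps)
qed

lemma card_eq_off_point:
  assumes "finite A" "finite B" "A - {x} = B - {x}"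
  shows "card A + (if x \<in> B then 1 else 0) = card B + (if x \<in> A then 1 else 0)"
proof -
  have "card (A - {x}) = card (B - {x})" using assms(3) by simp
  then show ?thesis using assms(1,2) card_gt_0_iff[of A] card_gt_0_iff[of B]
    by (cases "x \<in> A"; cases "x \<in> B") (auto simp: card_Diff_singleton_if)
qed

lemma invlen_split_two:
  assumes "a \<in> {1..n}" "b \<in> {1..n}" "a \<noteq> b"
  shows "invlen n p = card (inversions n p) + colour_cost p a + colour_cost p b
    + (\<Sum>x\<in>{1..n} - {a, b}. colour_cost p x)"
  using sum_remove_two[of "{1..n}" a b "colour_cost p"] assms by (simp add: invlen_def)

lemma cmult_geni_off_pair:
  assumes pG: "p \<in> G r n" and i: "1 \<le> i"
    and ab: "a \<in> {1..n}" "b \<in> {1..n}" "fst p a = i" "fst p b = Suc i"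
  defines "q \<equiv> cmult r (geni i) p"
  shows "inversions n q - {(min a b, max a b)} = inversions n p - {(min a b, max a b)}"
    and "(\<Sum>x\<in>{1..n} - {a, b}. colour_cost q x) = (\<Sum>x\<in>{1..n} - {a, b}. colour_cost p x)"
proof -
  let ?s = "fst p"
  have q: "fst q = Transposition.transpose i (Suc i) \<circ> ?s" "snd q = snd p"
    using cmult_geni[OF pG] by (simp_all add: q_def)
  have perm: "?s permutes {1..n}" using G_memD(1)[OF pG] .
  have s_pos: "?s x \<ge> 1" if "x \<in> {1..n}" for x
    using permutes_in_image[OF perm] that by auto
  have "signed_letter q y < signed_letter q x \<longleftrightarrow> signed_letter p y < signed_letter p x"
    if "x \<in> {1..n}" "y \<in> {1..n}" "x < y" "(x, y) \<noteq> (min a b, max a b)" for x y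
  proof -
    have "\<not> (x = a \<and> y = b)" "\<not> (x = b \<and> y = a)"
      using that by (auto simp: min_def max_def)
    then have "\<not> (?s x = i \<and> ?s y = Suc i)" "\<not> (?s x = Suc i \<and> ?s y = i)"
      using ab permutes_eq_iff[OF perm] by metis+
    then show ?thesis
      using signed_transpose_less_iff[OF i s_pos[OF that(1)] s_pos[OF that(2)]]
      by (simp add: signed_letter_def q)
  qed
  then show "inversions n q - {(min a b, max a b)} = inversions n p - {(min a b, max a b)}"
    by (auto simp: inversions_def)
  have "?s x \<noteq> i" "?s x \<noteq> Suc i" if "x \<noteq> a" "x \<noteq> b" for x
    using that ab permutes_eq_iff[OF perm] by metis+
  then show "(\<Sum>x\<in>{1..n} - {a, b}. colour_cost q x) = (\<Sum>x\<in>{1..n} - {a, b}. colour_cost p x)"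
    by (intro sum.cong) (auto simp: colour_cost_def q)
qed

lemma invlen_left_descent:
  assumes pG: "p \<in> G r n" and i: "1 \<le> i" "i < n" and D: "left_descent n i p"
  shows "invlen n p = invlen n (cmult r (geni i) p) + 1"
proof -
  let ?z = "snd p"
  define q where "q = cmult r (geni i) p"
  obtain a b where ab: "a \<in> {1..n}" "b \<in> {1..n}" "fst p a = i" "fst p b = Suc i"
    and cases: "(?z a = 0 \<and> ?z b = 0 \<and> b < a) \<or> (?z a = 0 \<and> ?z b > 0) \<or> (?z a > 0 \<and> ?z b > 0 \<and> a < b)"
    using D by (auto simp: left_descent_def)
  have anb: "a \<noteq> b" using ab by auto
  have q: "fst q a = Suc i" "fst q b = i" "snd q = ?z" using cmult_geni[OF pG] ab by (simp_all add: q_def)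
  note off_pair = cmult_geni_off_pair[OF pG i(1) ab, folded q_def]
  define pr where "pr = (min a b, max a b)"
  have card_pr: "card (inversions n q) + (if pr \<in> inversions n p then 1 else 0)
      = card (inversions n p) + (if pr \<in> inversions n q then 1 else 0)"
    using card_eq_off_point[OF finite_inversions finite_inversions off_pair(1)[folded pr_def]] .
  have pr_mem: "pr \<in> inversions n p' \<longleftrightarrow>
      (if a < b then signed_letter p' b < signed_letter p' a else signed_letter p' a < signed_letter p' b)" for p'
    using ab anb by (auto simp: inversions_def pr_def min_def max_def)
  note keys = signed_letter_def[of p a] signed_letter_def[of p b] signed_letter_def[of q a]
    signed_letter_def[of q b]
  note split = invlen_split_two[OF ab(1,2) anb, of p] invlen_split_two[OF ab(1,2) anb, of q]
  note cost = colour_cost_def[of p a] colour_cost_def[of p b] colour_cost_def[of q a] colour_cost_def[of q b]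
  from cases show ?thesis
  proof (elim disjE conjE)
    assume h: "?z a = 0" "?z b = 0" "b < a"
    then have "pr \<in> inversions n p" "pr \<notin> inversions n q"
      using pr_mem keys ab q by (auto simp: signed_def)
    then show ?thesis using h split card_pr off_pair(2) cost ab q by (simp add: q_def)
  next
    assume h: "?z a = 0" "?z b > 0"
    then have "pr \<in> inversions n p \<longleftrightarrow> pr \<in> inversions n q"
      using pr_mem keys ab q by (auto simp: signed_def)
    then show ?thesis using h split card_pr off_pair(2) cost ab q by (simp add: q_def split: if_splits)
  next
    assume h: "?z a > 0" "?z b > 0" "a < b"
    then have "pr \<in> inversions n p" "pr \<notin> inversions n q"
      using pr_mem keys ab q by (auto simp: signed_def)
    then show ?thesis using h split card_pr off_pair(2) cost ab q i(1) by (simp add: q_def)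
  qed
qed

lemma cmult_geni_involutive:
  assumes "p \<in> G r n" "1 \<le> r" "1 \<le> i" "i < n"
  shows "cmult r (geni i) p \<in> G r n" "cmult r (geni i) (cmult r (geni i) p) = p"
proof -
  show G2: "cmult r (geni i) p \<in> G r n"
    using assms gens_in_G[of r "geni i" n] by (intro cmult_in_G) (auto simp: gens_def)
  show "cmult r (geni i) (cmult r (geni i) p) = p"
    using cmult_geni[OF G2] cmult_geni[OF assms(1)] by (simp add: o_def)
qed

lemma left_descent_cmult_geni:
  assumes pG: "p \<in> G r n" and i: "1 \<le> i" "i < n" and nD: "\<not> left_descent n i p"
  shows "left_descent n i (cmult r (geni i) p)"
proof -
  have perm: "fst p permutes {1..n}" using G_memD(1)[OF pG] .
  obtain a b where a: "a \<in> {1..n}" "fst p a = i" and b: "b \<in> {1..n}" "fst p b = Suc i"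
    using permutes_preimage[OF perm, of i] permutes_preimage[OF perm, of "Suc i"] i by auto
  have "\<not> ((snd p a = 0 \<and> snd p b = 0 \<and> b < a) \<or> (snd p a = 0 \<and> snd p b > 0) \<or>
      (snd p a > 0 \<and> snd p b > 0 \<and> a < b))"
    using nD a b unfolding left_descent_def by blast
  moreover have "a \<noteq> b" using a b by auto
  ultimately show ?thesis
    unfolding left_descent_def cmult_geni[OF pG] using a b
    by (intro exI[of _ b] exI[of _ a]) auto
qed

lemma invlen_cmult_geni_le:
  assumes pG: "p \<in> G r n" and r: "1 \<le> r" and i: "1 \<le> i" "i < n"
  shows "invlen n (cmult r (geni i) p) \<le> invlen n p + 1"
proof (cases "left_descent n i p")
  case True
  then show ?thesis using invlen_left_descent[OF pG i] by simp
next
  case False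
  note q = cmult_geni_involutive[OF pG r i]
  show ?thesis
    using invlen_left_descent[OF q(1) i left_descent_cmult_geni[OF pG i False]] q(2) by simp
qed

text \<open>Only the letter of value 1 changes its colour, and the letter \<open>1\<close> is never inverted with
  another letter because of its colour: its signed value is \<open>\<plusminus>1\<close>, all others have modulus at
  least 2.\<close>

lemma invlen_recolour_one:
  assumes pG: "p \<in> G r n" and a: "a \<in> {1..n}" "fst p a = 1"
    and q: "fst q = fst p" "\<And>k. k \<noteq> a \<Longrightarrow> snd q k = snd p k"
  shows "invlen n q + snd p a = invlen n p + snd q a"
proof -
  have perm: "fst p permutes {1..n}" using G_memD(1)[OF pG] .
  have ge2: "fst p x \<ge> 2" if "x \<in> {1..n}" "x \<noteq> a" for x
    using permutes_in_image[OF perm, of x] permutes_eq_iff[OF perm, of x a] a that by auto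
  have "signed_letter q y < signed_letter q x \<longleftrightarrow> signed_letter p y < signed_letter p x" if "x \<in> {1..n}" "y \<in> {1..n}" for x y
    using that ge2[of x] ge2[of y] a q by (cases "x = a"; cases "y = a") (auto simp: signed_letter_def signed_def)
  then have inv: "inversions n q = inversions n p" unfolding inversions_def by blast
  have cost: "(\<Sum>x\<in>{1..n}. colour_cost p' x) = colour_cost p' a + (\<Sum>x\<in>{1..n} - {a}. colour_cost p' x)"
    for p' using sum.remove[of "{1..n}" a "colour_cost p'"] a by simp
  have "(\<Sum>x\<in>{1..n} - {a}. colour_cost q x) = (\<Sum>x\<in>{1..n} - {a}. colour_cost p x)"
    by (rule sum.cong) (auto simp: colour_cost_def q)
  moreover have "colour_cost q a = snd q a" "colour_cost p a = snd p a"
    using a q by (auto simp: colour_cost_def)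
  ultimately show ?thesis using cost[of p] cost[of q] inv by (simp add: invlen_def)
qed

lemma invlen_cmult_gen0_le:
  assumes pG: "p \<in> G r n" and n: "1 \<le> n"
  shows "invlen n (cmult r (gen0 r) p) \<le> invlen n p + 1"
proof -
  have perm: "fst p permutes {1..n}" using G_memD(1)[OF pG] .
  obtain a where a: "a \<in> {1..n}" "fst p a = 1" using permutes_preimage[OF perm, of 1] n by auto
  let ?q = "cmult r (gen0 r) p"
  have "fst p k \<noteq> 1" if "k \<noteq> a" for k
    using that a permutes_eq_iff[OF perm, of k a] by simp
  then have q: "fst ?q = fst p" "\<And>k. k \<noteq> a \<Longrightarrow> snd ?q k = snd p k" "snd ?q a = (snd p a + 1) mod r"
    using cmult_gen0[OF pG] a by auto
  have "snd ?q a \<le> snd p a + 1" using q(3) by (metis mod_less_eq_dividend)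
  then show ?thesis using invlen_recolour_one[OF pG a q(1,2)] by linarith
qed

lemma invlen_gen0_descent:
  assumes pG: "p \<in> G r n" and a: "a \<in> {1..n}" "fst p a = 1" and z: "snd p a > 0"
  shows "\<exists>q \<in> G r n. cmult r (gen0 r) q = p \<and> invlen n p = invlen n q + 1"
proof -
  have perm: "fst p permutes {1..n}" using G_memD(1)[OF pG] .
  define q where "q = (fst p, (snd p)(a := snd p a - 1))"
  have r: "snd p a < r" using G_memD(2)[OF pG] .
  have qG: "q \<in> G r n"
    using G_memD[OF pG] r a by (intro G_memI) (auto simp: q_def less_imp_diff_less)
  have "(if fst p k = 1 then (snd q k + 1) mod r else snd q k) = snd p k" for k
    using a z r permutes_eq_iff[OF perm, of k a] by (cases "k = a") (auto simp: q_def)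
  then have "cmult r (gen0 r) q = p" unfolding cmult_gen0[OF qG] by (simp add: q_def fun_eq_iff)
  moreover have "invlen n p + snd q a = invlen n q + snd p a"
    using invlen_recolour_one[OF qG a(1)] a by (simp add: q_def)
  ultimately show ?thesis using qG z by (auto simp: q_def)
qed

text \<open>Without any descent the positions of \<open>1, \<dots>, n\<close> increase and all colours vanish.\<close>

lemma no_descent_imp_cone:
  assumes pG: "p \<in> G r n" and nD: "\<And>i. 1 \<le> i \<Longrightarrow> i < n \<Longrightarrow> \<not> left_descent n i p"
    and c1: "1 \<le> n \<Longrightarrow> snd p (inv (fst p) 1) = 0"
  shows "p = cone"
proof -
  let ?s = "fst p" and ?z = "snd p"
  have perm: "?s permutes {1..n}" using G_memD(1)[OF pG] .
  let ?pos = "inv ?s"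
  note pos = permutes_preimage[OF perm]
  have step: "?z (?pos (Suc v)) = 0 \<and> ?pos v < ?pos (Suc v)"
    if "1 \<le> v" "v < n" "?z (?pos v) = 0" for v
  proof -
    have a: "?pos v \<in> {1..n}" "?s (?pos v) = v" using pos[of v] that by auto
    have b: "?pos (Suc v) \<in> {1..n}" "?s (?pos (Suc v)) = Suc v" using pos[of "Suc v"] that by auto
    have "?pos v \<noteq> ?pos (Suc v)" using a(2) b(2) by auto
    moreover have "\<not> ((?z (?pos v) = 0 \<and> ?z (?pos (Suc v)) = 0 \<and> ?pos (Suc v) < ?pos v) \<or>
        (?z (?pos v) = 0 \<and> ?z (?pos (Suc v)) > 0))"
      using nD[OF that(1,2)] a b unfolding left_descent_def by blast
    ultimately show ?thesis using that(3) by auto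
  qed
  have z0: "?z (?pos v) = 0 \<and> ?pos v \<ge> v" if "v \<in> {1..n}" for v
    using that
  proof (induction v)
    case (Suc v)
    then show ?case using c1 pos(1)[of 1] step[of v] by (cases "v = 0") auto
  qed simp
  have "?pos = id" using permutes_natset_ge[OF permutes_inv[OF perm]] z0 by blast
  then have "?s = id" using permutes_inverses(1)[OF perm] by (metis id_apply fun_eq_iff)
  moreover have "?z a = 0" for a
    using z0[of a] G_memD(3)[OF pG, of a] \<open>?pos = id\<close> by (cases "a \<in> {1..n}") auto
  ultimately show ?thesis by (cases p) (auto simp: cone_def fun_eq_iff)
qed

lemma invlen_word:
  assumes r: "1 \<le> r" and pG: "p \<in> G r n"
  shows "\<exists>ws. length ws = invlen n p \<and> set ws \<subseteq> gens r n \<and> foldr (cmult r) ws cone = p"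
  using pG
proof (induction "invlen n p" arbitrary: p rule: less_induct)
  case less
  have perm: "fst p permutes {1..n}" using G_memD(1)[OF less.prems] .
  have shorter: "\<exists>ws. length ws = invlen n p \<and> set ws \<subseteq> gens r n \<and> foldr (cmult r) ws cone = p"
    if "g \<in> gens r n" "q \<in> G r n" "cmult r g q = p" "invlen n p = invlen n q + 1" for g q
  proof -
    have "\<exists>ws. length ws = invlen n q \<and> set ws \<subseteq> gens r n \<and> foldr (cmult r) ws cone = q"
      using less.hyps[of q] that(2,4) by simp
    then obtain ws where "length ws = invlen n q" "set ws \<subseteq> gens r n" "foldr (cmult r) ws cone = q"
      by blast
    then show ?thesis using that by (intro exI[of _ "g # ws"]) auto
  qed
  consider (colour) "1 \<le> n" "snd p (inv (fst p) 1) > 0"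
    | (descent) i where "1 \<le> i" "i < n" "left_descent n i p"
    | (none) "p = cone"
  proof (cases "1 \<le> n \<and> snd p (inv (fst p) 1) > 0")
    case False
    then have "1 \<le> n \<Longrightarrow> snd p (inv (fst p) 1) = 0" by simp
    then show thesis using that(2,3) no_descent_imp_cone[OF less.prems] by blast
  qed (use that(1) in blast)
  then show ?case
  proof cases
    case colour
    then obtain q where "q \<in> G r n" "cmult r (gen0 r) q = p" "invlen n p = invlen n q + 1"
      using invlen_gen0_descent[OF less.prems permutes_preimage[OF perm]] by auto
    then show ?thesis using shorter[of "gen0 r"] colour(1) by (simp add: gens_def)
  next
    case (descent i)
    note q = cmult_geni_involutive[OF less.prems r descent(1,2)]
    show ?thesis using shorter[OF _ q] invlen_left_descent[OF less.prems descent] descent(1,2)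
      by (auto simp: gens_def)
  next
    case none
    then show ?thesis by (intro exI[of _ "[]"]) (simp add: invlen_cone)
  qed
qed

lemma invlen_foldr_le:
  assumes r: "1 \<le> r" and ws: "set ws \<subseteq> gens r n"
  shows "invlen n (foldr (cmult r) ws cone) \<le> length ws"
  using ws
proof (induction ws)
  case Nil
  then show ?case by (simp add: invlen_cone)
next
  case (Cons g ws)
  have fG: "foldr (cmult r) ws cone \<in> G r n" using foldr_cmult_in_G[OF r] Cons.prems by auto
  have "g \<in> gens r n" using Cons.prems by simp
  then have "invlen n (cmult r g (foldr (cmult r) ws cone)) \<le> invlen n (foldr (cmult r) ws cone) + 1"
  proof (cases rule: gens_cases)
    case 1
    then show ?thesis using invlen_cmult_gen0_le[OF fG] by simp
  next
    case (2 i)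
    then show ?thesis using invlen_cmult_geni_le[OF fG r] by simp
  qed
  then show ?case using Cons by simp
qed

lemma clength_eq_invlen:
  assumes r: "1 \<le> r" and pG: "p \<in> G r n"
  shows "clength r n p = invlen n p"
  unfolding clength_def
proof (rule Least_equality)
  show "\<exists>ws. length ws = invlen n p \<and> set ws \<subseteq> gens r n \<and> foldr (cmult r) ws cone = p"
    using invlen_word[OF r pG] .
  show "invlen n p \<le> k"
    if "\<exists>ws. length ws = k \<and> set ws \<subseteq> gens r n \<and> foldr (cmult r) ws cone = p" for k
    using that invlen_foldr_le[OF r] by blast
qed

section \<open>Deleting the largest letter\<close>

definition skip :: "nat \<Rightarrow> nat \<Rightarrow> nat" where
  "skip c i = (if i < c then i else Suc i)"

definition unskip :: "nat \<Rightarrow> nat \<Rightarrow> nat" where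
  "unskip c i = (if i < c then i else i - 1)"

lemma skip_unskip: "i \<noteq> c \<Longrightarrow> skip c (unskip c i) = i"
  by (auto simp: skip_def unskip_def)

lemma unskip_skip [simp]: "unskip c (skip c i) = i"
  by (simp add: skip_def unskip_def)

lemma skip_neq [simp]: "skip c i \<noteq> c"
  by (simp add: skip_def)

lemma skip_eq_iff [simp]: "skip c i = skip c j \<longleftrightarrow> i = j"
  by (auto simp: skip_def)

lemma skip_less_iff [simp]: "skip c a < skip c b \<longleftrightarrow> a < b"
  by (auto simp: skip_def)

lemma skip_in_range: "c \<in> {1..Suc m} \<Longrightarrow> a \<in> {1..m} \<Longrightarrow> skip c a \<in> {1..Suc m}"
  by (auto simp: skip_def)

lemma unskip_in_range:
  "c \<in> {1..Suc m} \<Longrightarrow> j \<in> {1..Suc m} \<Longrightarrow> j \<noteq> c \<Longrightarrow> unskip c j \<in> {1..m}"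
  by (auto simp: unskip_def)

lemma image_skip:
  assumes c: "c \<in> {1..Suc m}"
  shows "skip c ` {1..m} = {1..Suc m} - {c}"
proof
  show "skip c ` {1..m} \<subseteq> {1..Suc m} - {c}" using skip_in_range[OF c] by auto
  show "{1..Suc m} - {c} \<subseteq> skip c ` {1..m}"
  proof
    fix j assume j: "j \<in> {1..Suc m} - {c}"
    then have "j = skip c (unskip c j)" "unskip c j \<in> {1..m}"
      using skip_unskip[of j c] unskip_in_range[OF c, of j] by auto
    then show "j \<in> skip c ` {1..m}" by blast
  qed
qed

definition del_top :: "nat \<Rightarrow> cperm \<Rightarrow> cperm" where
  "del_top n p = (let c = inv (fst p) n in
     (\<lambda>i. if i < n then fst p (skip c i) else i, \<lambda>i. if i < n then snd p (skip c i) else 0))"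

definition ins_top :: "nat \<Rightarrow> cperm \<Rightarrow> nat \<Rightarrow> nat \<Rightarrow> cperm" where
  "ins_top n p c t = (\<lambda>i. if i = c then n else if i \<le> n then fst p (unskip c i) else i,
                      \<lambda>i. if i = c then t else if i \<le> n then snd p (unskip c i) else 0)"

lemma top_position:
  assumes "p \<in> G r (Suc m)"
  shows "inv (fst p) (Suc m) \<in> {1..Suc m}" "fst p (inv (fst p) (Suc m)) = Suc m"
  using permutes_preimage[OF G_memD(1)[OF assms], of "Suc m"] by auto

lemma del_top_in_G:
  assumes pG: "p \<in> G r (Suc m)"
  shows "del_top (Suc m) p \<in> G r m"
proof -
  define c where "c = inv (fst p) (Suc m)"
  have perm: "fst p permutes {1..Suc m}" using G_memD(1)[OF pG] .
  have c: "c \<in> {1..Suc m}" "fst p c = Suc m" using top_position[OF pG] by (auto simp: c_def)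
  let ?\<sigma> = "\<lambda>i. if i < Suc m then fst p (skip c i) else i"
  have d: "del_top (Suc m) p = (?\<sigma>, \<lambda>i. if i < Suc m then snd p (skip c i) else 0)"
    unfolding del_top_def Let_def c_def by simp
  have skip0: "skip c 0 = 0" using c by (simp add: skip_def)
  have "?\<sigma> permutes {1..m}"
  proof (rule inj_imp_permutes)
    show "inj_on ?\<sigma> {1..m}"
      by (rule inj_onI) (auto simp: permutes_eq_iff[OF perm])
    show "?\<sigma> i \<in> {1..m}" if "i \<in> {1..m}" for i
      using permutes_in_image[OF perm, of "skip c i"] skip_in_range[OF c(1) that]
        permutes_eq_iff[OF perm, of "skip c i" c] c(2) that by auto
    show "?\<sigma> i = i" if "i \<notin> {1..m}" for i
      using that skip0 permutes_not_in[OF perm, of 0] by (cases "i = 0") auto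
  qed simp
  moreover have "snd p (skip c i) < r" "0 < r" "snd p 0 = 0" for i
    using G_memD(2,3)[OF pG] by (auto intro: le_less_trans[OF _ G_memD(2)[OF pG]])
  ultimately show ?thesis unfolding d
    using skip0 by (intro G_memI) (auto simp: not_less_eq_eq)
qed

lemma ins_top_in_G:
  assumes pG: "p \<in> G r m" and c: "c \<in> {1..Suc m}" and t: "t < r"
  shows "ins_top (Suc m) p c t \<in> G r (Suc m)"
proof -
  have perm: "fst p permutes {1..m}" using G_memD(1)[OF pG] .
  let ?\<sigma> = "\<lambda>i. if i = c then Suc m else if i \<le> Suc m then fst p (unskip c i) else i"
  have img: "fst p (unskip c i) \<in> {1..m}" if "i \<in> {1..Suc m}" "i \<noteq> c" for i
    using permutes_in_image[OF perm] unskip_in_range[OF c that] by blast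
  have "?\<sigma> permutes {1..Suc m}"
  proof (rule inj_imp_permutes)
    show "inj_on ?\<sigma> {1..Suc m}"
    proof (rule inj_onI)
      fix x y assume x: "x \<in> {1..Suc m}" and y: "y \<in> {1..Suc m}" and e: "?\<sigma> x = ?\<sigma> y"
      show "x = y"
      proof (cases "x = c"; cases "y = c")
        assume "x \<noteq> c" "y \<noteq> c"
        then have "unskip c x = unskip c y" using e x y permutes_eq_iff[OF perm] by simp
        then show "x = y" using skip_unskip \<open>x \<noteq> c\<close> \<open>y \<noteq> c\<close> by metis
      qed (use e x y img in \<open>fastforce+\<close>)
    qed
    show "?\<sigma> i \<in> {1..Suc m}" if "i \<in> {1..Suc m}" for i
      using that img[OF that] by auto
    show "?\<sigma> i = i" if "i \<notin> {1..Suc m}" for i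
      using that c permutes_not_in[OF perm, of 0] by (cases "i = 0") (auto simp: unskip_def)
  qed simp
  moreover have "snd p 0 = 0" using G_memD(3)[OF pG] by simp
  ultimately show ?thesis unfolding ins_top_def
    using G_memD(2)[OF pG] t c by (intro G_memI) (auto simp: unskip_def not_less_eq_eq)
qed

lemma ins_top_position:
  assumes "p \<in> G r m" "c \<in> {1..Suc m}" "t < r"
  shows "inv (fst (ins_top (Suc m) p c t)) (Suc m) = c"
  using permutes_inv_eq[OF G_memD(1)[OF ins_top_in_G[OF assms]]] by (simp add: ins_top_def)

lemma del_top_ins_top:
  assumes pG: "p \<in> G r m" and c: "c \<in> {1..Suc m}" and t: "t < r"
  shows "del_top (Suc m) (ins_top (Suc m) p c t) = p"
proof -
  have perm: "fst p permutes {1..m}" using G_memD(1)[OF pG] .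
  have out: "fst p i = i" "snd p i = 0" if "\<not> i < Suc m" for i
    using that permutes_not_in[OF perm] G_memD(3)[OF pG] by auto
  have "skip c i \<le> Suc m" if "i < Suc m" for i using that c by (auto simp: skip_def)
  then show ?thesis unfolding del_top_def ins_top_position[OF assms] Let_def
    using out by (cases p) (simp add: fun_eq_iff ins_top_def)
qed

lemma ins_top_del_top:
  assumes pG: "p \<in> G r (Suc m)"
  shows "ins_top (Suc m) (del_top (Suc m) p) (inv (fst p) (Suc m)) (snd p (inv (fst p) (Suc m))) = p"
proof -
  define c where "c = inv (fst p) (Suc m)"
  have perm: "fst p permutes {1..Suc m}" using G_memD(1)[OF pG] .
  have c: "c \<in> {1..Suc m}" "fst p c = Suc m" using top_position[OF pG] by (auto simp: c_def)
  have out: "fst p i = i" "snd p i = 0" if "\<not> i \<le> Suc m" for i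
    using that permutes_not_in[OF perm] G_memD(3)[OF pG] by auto
  have "unskip c i < Suc m" if "i \<le> Suc m" "i \<noteq> c" for i using that c by (auto simp: unskip_def)
  then show ?thesis unfolding c_def[symmetric] ins_top_def del_top_def Let_def
    using out skip_unskip c by (cases p) (auto simp: fun_eq_iff)
qed

definition rel_minima :: "nat \<Rightarrow> cperm \<Rightarrow> (nat \<Rightarrow> nat \<Rightarrow> bool) \<Rightarrow> (nat \<times> nat) set" where
  "rel_minima n p R = {(fst p i, snd p i) | i. i \<in> {1..n} \<and> (\<forall>j\<in>{1..n}. R i j \<longrightarrow> fst p i < fst p j)}"

lemma Rmil_eq_rel_minima: "Rmil n p = rel_minima n p (<)"
  unfolding Rmil_def rel_minima_def by (intro Collect_cong ex_cong1) auto

lemma Lmil_eq_rel_minima: "Lmil n p = rel_minima n p (\<lambda>i j. j < i)"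
  unfolding Lmil_def rel_minima_def by (intro Collect_cong ex_cong1) auto

definition lr_maxima :: "nat \<Rightarrow> cperm \<Rightarrow> ((nat \<times> nat) \<times> nat) set" where
  "lr_maxima n p = {((i, fst p i), snd p i) | i. i \<in> {1..n} \<and> (\<forall>j\<in>{1..<i}. fst p j < fst p i)}"

lemma Lmal_eq_image: "Lmal n p = (\<lambda>(a, t). (snd a, t)) ` lr_maxima n p"
  unfolding Lmal_def lr_maxima_def setcompr_eq_image image_image by simp

lemma Lmap_eq_image: "Lmap n p = (\<lambda>(a, t). (fst a, t)) ` lr_maxima n p"
  unfolding Lmap_def lr_maxima_def setcompr_eq_image image_image by simp

text \<open>The largest letter is a left-to-right maximum and hides all later ones, so only the
  positions before it matter.\<close>

lemma lr_maxima_top: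
  assumes pG: "p \<in> G r (Suc m)" and c: "c \<in> {1..Suc m}" "fst p c = Suc m"
    and agree: "\<And>a. a < c \<Longrightarrow> fst p' a = fst p a \<and> snd p' a = snd p a"
  shows "lr_maxima (Suc m) p = {x \<in> lr_maxima m p'. fst (fst x) < c} \<union> {((c, Suc m), snd p c)}"
proof -
  have perm: "fst p permutes {1..Suc m}" using G_memD(1)[OF pG] .
  have below_top: "fst p j < Suc m" if "j \<in> {1..Suc m}" "j \<noteq> c" for j
    using permutes_in_image[OF perm, of j] permutes_eq_iff[OF perm, of j c] c that by auto
  have before: "(\<forall>j\<in>{1..<i}. fst p' j < fst p' i) \<longleftrightarrow> (\<forall>j\<in>{1..<i}. fst p j < fst p i)"
    if "i < c" for i using that agree by auto
  show ?thesis
  proof (rule set_eqI)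
    fix x
    have "x \<in> lr_maxima (Suc m) p \<longleftrightarrow>
        x = ((c, Suc m), snd p c) \<or> (\<exists>i. x = ((i, fst p i), snd p i) \<and> i \<in> {1..m} \<and> i < c \<and>
          (\<forall>j\<in>{1..<i}. fst p j < fst p i))"
    proof
      assume "x \<in> lr_maxima (Suc m) p"
      then obtain i where i: "i \<in> {1..Suc m}" "\<forall>j\<in>{1..<i}. fst p j < fst p i" "x = ((i, fst p i), snd p i)"
        unfolding lr_maxima_def by auto
      have "i \<le> c"
        using i c below_top[OF i(1)] by (metis atLeastLessThan_iff leI less_not_refl order.strict_trans
            atLeastAtMost_iff)
      then show "x = ((c, Suc m), snd p c) \<or> (\<exists>i. x = ((i, fst p i), snd p i) \<and> i \<in> {1..m} \<and> i < c \<and>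
          (\<forall>j\<in>{1..<i}. fst p j < fst p i))"
        using i c by (cases "i = c") auto
    next
      assume "x = ((c, Suc m), snd p c) \<or> (\<exists>i. x = ((i, fst p i), snd p i) \<and> i \<in> {1..m} \<and> i < c \<and>
          (\<forall>j\<in>{1..<i}. fst p j < fst p i))"
      then show "x \<in> lr_maxima (Suc m) p"
        unfolding lr_maxima_def using c below_top by fastforce
    qed
    also have "\<dots> \<longleftrightarrow> x \<in> {x \<in> lr_maxima m p'. fst (fst x) < c} \<union> {((c, Suc m), snd p c)}"
      unfolding lr_maxima_def using before agree c by fastforce
    finally show "x \<in> lr_maxima (Suc m) p \<longleftrightarrow> x \<in> {x \<in> lr_maxima m p'. fst (fst x) < c} \<union> {((c, Suc m), snd p c)}" .
  qed
qed

locale top_deletion =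
  fixes r m :: nat and p :: cperm and c :: nat
  assumes pG: "p \<in> G r (Suc m)" and c_def: "c = inv (fst p) (Suc m)"
begin

definition p' where "p' = del_top (Suc m) p"

lemma perm: "fst p permutes {1..Suc m}"
  using G_memD(1)[OF pG] .

lemma c: "c \<in> {1..Suc m}" "fst p c = Suc m"
  using top_position[OF pG] c_def by auto

lemma p'_in_G: "p' \<in> G r m"
  unfolding p'_def by (rule del_top_in_G[OF pG])

lemma p'_apply: "a \<le> m \<Longrightarrow> fst p' a = fst p (skip c a)" "a \<le> m \<Longrightarrow> snd p' a = snd p (skip c a)"
  by (simp_all add: p'_def del_top_def c_def Let_def)

lemma below_top: "j \<in> {1..Suc m} \<Longrightarrow> j \<noteq> c \<Longrightarrow> fst p j < Suc m"
  using permutes_in_image[OF perm, of j] permutes_eq_iff[OF perm, of j c] c by auto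

lemma rel_minima_del_top:
  assumes R: "\<And>a b. R (skip c a) (skip c b) = R a b"
  shows "rel_minima (Suc m) p R
    = rel_minima m p' R \<union> (if \<forall>j\<in>{1..Suc m}. \<not> R c j then {(Suc m, snd p c)} else {})"
proof -
  have range: "{1..Suc m} = insert c (skip c ` {1..m})" using image_skip[OF c(1)] c(1) by auto
  define P where "P i \<longleftrightarrow> (\<forall>j\<in>{1..Suc m}. R i j \<longrightarrow> fst p i < fst p j)" for i
  have old: "P (skip c a) \<longleftrightarrow> (\<forall>b\<in>{1..m}. R a b \<longrightarrow> fst p' a < fst p' b)" if "a \<in> {1..m}" for a
    unfolding P_def range using below_top[OF skip_in_range[OF c(1) that] skip_neq] that c(2) R
    by (auto simp: p'_apply)
  have new: "P c \<longleftrightarrow> (\<forall>j\<in>{1..Suc m}. \<not> R c j)"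
    unfolding P_def using permutes_in_image[OF perm] c(2) by fastforce
  let ?letter = "\<lambda>p i. (fst p i, snd p i)"
  have "rel_minima (Suc m) p R = ?letter p ` {i \<in> {1..Suc m}. P i}"
    unfolding rel_minima_def P_def by blast
  also have "{i \<in> {1..Suc m}. P i} = (if P c then {c} else {}) \<union> skip c ` {a \<in> {1..m}. P (skip c a)}"
    unfolding range by auto
  also have "?letter p ` \<dots> = ?letter p ` (if P c then {c} else {}) \<union> ?letter p ` skip c ` {a \<in> {1..m}. P (skip c a)}"
    by (rule image_Un)
  also have "?letter p ` (if P c then {c} else {}) = (if \<forall>j\<in>{1..Suc m}. \<not> R c j then {(Suc m, snd p c)} else {})"
    using new c(2) by simp
  also have "?letter p ` skip c ` {a \<in> {1..m}. P (skip c a)}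
      = ?letter p' ` {a \<in> {1..m}. \<forall>b\<in>{1..m}. R a b \<longrightarrow> fst p' a < fst p' b}"
    unfolding image_image using old by (intro image_cong Collect_cong) (auto simp: p'_apply)
  also have "\<dots> = rel_minima m p' R"
    unfolding rel_minima_def by blast
  finally show ?thesis by (simp only: Un_commute)
qed

lemma Rmil_del_top:
  "Rmil (Suc m) p = Rmil m p' \<union> (if c = Suc m then {(Suc m, snd p c)} else {})"
proof -
  have "(\<forall>j\<in>{1..Suc m}. \<not> c < j) \<longleftrightarrow> c = Suc m"
    using c(1) by (auto dest: bspec[of _ _ "Suc m"])
  then show ?thesis using rel_minima_del_top[of "(<)"] by (simp add: Rmil_eq_rel_minima)
qed

lemma Lmil_del_top:
  "Lmil (Suc m) p = Lmil m p' \<union> (if c = 1 then {(Suc m, snd p c)} else {})"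
proof -
  have "(\<forall>j\<in>{1..Suc m}. \<not> j < c) \<longleftrightarrow> c = 1"
    using c(1) by (auto dest: bspec[of _ _ 1])
  then show ?thesis using rel_minima_del_top[of "\<lambda>i j. j < i"] by (simp add: Lmil_eq_rel_minima)
qed

lemma lr_maxima_del_top:
  "lr_maxima (Suc m) p = {x \<in> lr_maxima m p'. fst (fst x) < c} \<union> {((c, Suc m), snd p c)}"
  using c by (intro lr_maxima_top[OF pG]) (auto simp: p'_apply skip_def)


lemma signed_letter_del_top: "a \<le> m \<Longrightarrow> signed_letter p' a = signed_letter p (skip c a)"
  by (simp add: signed_letter_def p'_apply)

lemma inversions_del_top_skip:
  assumes "u \<noteq> c" "v \<noteq> c"
  shows "(u, v) \<in> inversions (Suc m) p \<longleftrightarrow> (u, v) \<in> map_prod (skip c) (skip c) ` inversions m p'"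
proof
  assume "(u, v) \<in> inversions (Suc m) p"
  then have uv: "u \<in> {1..Suc m}" "v \<in> {1..Suc m}" "u < v" "signed_letter p v < signed_letter p u"
    by (auto simp: inversions_def)
  define a b where "a = unskip c u" and "b = unskip c v"
  have ab: "a \<in> {1..m}" "b \<in> {1..m}" "u = skip c a" "v = skip c b"
    using uv(1,2) assms unskip_in_range[OF c(1)] skip_unskip by (auto simp: a_def b_def)
  then have "(a, b) \<in> inversions m p'" using uv signed_letter_del_top by (auto simp: inversions_def)
  moreover have "(u, v) = map_prod (skip c) (skip c) (a, b)" using ab by simp
  ultimately show "(u, v) \<in> map_prod (skip c) (skip c) ` inversions m p'" by (rule rev_image_eqI)
next
  assume "(u, v) \<in> map_prod (skip c) (skip c) ` inversions m p'"
  then obtain a b where "(a, b) \<in> inversions m p'" "u = skip c a" "v = skip c b" by auto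
  then show "(u, v) \<in> inversions (Suc m) p"
    using skip_in_range[OF c(1)] signed_letter_del_top by (auto simp: inversions_def)
qed

text \<open>The letter \<open>n\<^sup>[z\<^sup>]\<close> at position \<open>c\<close> has signed value \<open>\<plusminus>n\<close>, the extreme one: it is
  inverted with every later letter if \<open>z = 0\<close> and with every earlier one otherwise.\<close>

lemma inversions_del_top:
  "inversions (Suc m) p = map_prod (skip c) (skip c) ` inversions m p'
     \<union> (if snd p c = 0 then Pair c ` {c<..Suc m} else (\<lambda>a. (a, c)) ` {1..<c})"
proof -
  have key_c: "signed_letter p c = (if snd p c = 0 then int (Suc m) else - int (Suc m))"
    using c by (simp add: signed_letter_def signed_def)
  have key_other: "signed_letter p j < signed_letter p c \<longleftrightarrow> snd p c = 0"
    "signed_letter p c < signed_letter p j \<longleftrightarrow> snd p c \<noteq> 0" if "j \<in> {1..Suc m}" "j \<noteq> c" for j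
    using below_top[OF that] key_c by (auto simp: signed_letter_def signed_def)
  define C where "C = (if snd p c = 0 then Pair c ` {c<..Suc m} else (\<lambda>a. (a, c)) ` {1..<c})"
  have memC: "(u, v) \<in> C \<longleftrightarrow> (if snd p c = 0 then u = c \<and> v \<in> {c<..Suc m} else v = c \<and> u \<in> {1..<c})"
    for u v by (auto simp: C_def)
  have on_c: "(u, v) \<in> inversions (Suc m) p \<longleftrightarrow> (u, v) \<in> C" if "u = c \<or> v = c" for u v
  proof (cases "u = c")
    case True
    then show ?thesis using c(1) key_other[of v] by (auto simp: inversions_def memC)
  next
    case False
    then have "v = c" using that by simp
    then show ?thesis using c(1) key_other[of u] False by (auto simp: inversions_def memC)
  qed
  have "(u, v) \<in> inversions (Suc m) p \<longleftrightarrow> (u, v) \<in> map_prod (skip c) (skip c) ` inversions m p' \<union> C"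
    for u v
  proof (cases "u = c \<or> v = c")
    case True
    then show ?thesis using on_c[OF True] by (auto simp: eq_commute[of c])
  next
    case False
    then show ?thesis using inversions_del_top_skip[of u v] by (auto simp: memC)
  qed
  then have "inversions (Suc m) p = map_prod (skip c) (skip c) ` inversions m p' \<union> C"
    by (simp add: set_eq_iff split_paired_All)
  then show ?thesis by (simp add: C_def)
qed

lemma invlen_del_top:
  "invlen (Suc m) p = invlen m p' + (if snd p c = 0 then Suc m - c else (c - 1) + (Suc m + snd p c - 1))"
proof -
  let ?H = "map_prod (skip c) (skip c)"
  define C where "C = (if snd p c = 0 then Pair c ` {c<..Suc m} else (\<lambda>a. (a, c)) ` {1..<c})"
  have "inj_on ?H (inversions m p')" by (rule inj_onI) auto
  moreover have "?H ` inversions m p' \<inter> C = {}" by (auto simp: C_def)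
  moreover have "card C = (if snd p c = 0 then Suc m - c else c - 1)"
    by (simp add: C_def card_image inj_on_def)
  ultimately have card: "card (inversions (Suc m) p) = card (inversions m p') + card C"
    unfolding inversions_del_top C_def[symmetric]
    by (simp add: card_Un_disjoint card_image finite_inversions C_def)
  have "(\<Sum>j\<in>{1..Suc m} - {c}. colour_cost p j) = (\<Sum>a\<in>{1..m}. colour_cost p (skip c a))"
    unfolding image_skip[OF c(1), symmetric] by (simp add: sum.reindex inj_on_def)
  also have "\<dots> = (\<Sum>a\<in>{1..m}. colour_cost p' a)"
    by (rule sum.cong) (auto simp: colour_cost_def p'_apply)
  finally have cost: "(\<Sum>j\<in>{1..Suc m}. colour_cost p j) = colour_cost p c + (\<Sum>a\<in>{1..m}. colour_cost p' a)"
    using c(1) sum.remove[of "{1..Suc m}" c "colour_cost p"] by simp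
  have "colour_cost p c = (if snd p c = 0 then 0 else Suc m + snd p c - 1)"
    using c by (simp add: colour_cost_def)
  then show ?thesis
    using card cost \<open>card C = _\<close> by (simp add: invlen_def)
qed

end

section \<open>One step of the sorting algorithm\<close>

definition neg_colour :: "nat \<Rightarrow> nat \<Rightarrow> nat" where
  "neg_colour r z = (r - z mod r) mod r"

lemma neg_colour_less: "1 \<le> r \<Longrightarrow> neg_colour r z < r"
  by (simp add: neg_colour_def)

lemma neg_colour_neg_colour: "z < r \<Longrightarrow> neg_colour r (neg_colour r z) = z"
  by (cases "z = 0") (auto simp: neg_colour_def)

text \<open>\<open>sort_top r n p\<close> is the word \<open>\<pi>\<^sup>(\<^sup>n\<^sup>-\<^sup>1\<^sup>)\<close> of the sorting algorithm, kept as an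
  element of \<open>G(r, n - 1)\<close>; \<open>unsort_top\<close> undoes it, given the position \<open>c\<close> and the exponent \<open>e\<close>.\<close>

definition sort_top :: "nat \<Rightarrow> nat \<Rightarrow> cperm \<Rightarrow> cperm" where
  "sort_top r n p = (let c = inv (fst p) n; e = neg_colour r (snd p c) in
     ((fst p)(c := fst p n, n := n), (snd p)(c := (snd p n + r - e) mod r, n := 0)))"

definition unsort_top :: "nat \<Rightarrow> nat \<Rightarrow> cperm \<Rightarrow> nat \<Rightarrow> nat \<Rightarrow> cperm" where
  "unsort_top r n p c e = (if c = n then (fst p, (snd p)(n := neg_colour r e))
     else ((fst p)(c := n, n := fst p c), (snd p)(c := neg_colour r e, n := (snd p c + e) mod r)))"

lemma bij_betw_sort_step:
  assumes B: "bij_betw \<tau> {1..Suc j} {1..Suc j}" and c: "c \<in> {1..Suc j}" "\<tau> c = Suc j"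
  shows "bij_betw (if c < Suc j then \<tau>(c := \<tau> (Suc j)) else \<tau>) {1..j} {1..j}"
proof -
  let ?g = "\<tau> \<circ> Transposition.transpose c (Suc j)"
  have "bij_betw (Transposition.transpose c (Suc j)) {1..Suc j} {1..Suc j}"
    using c(1) by (intro permutes_imp_bij permutes_swap_id) auto
  then have "bij_betw ?g {1..Suc j} {1..Suc j}" using B by (rule bij_betw_trans)
  moreover have "bij_betw ?g {Suc j} {Suc j}" using c(2) by simp
  ultimately have "bij_betw ?g ({1..Suc j} - {Suc j}) ({1..Suc j} - {Suc j})"
    by (rule bij_betw_DiffI) auto
  moreover have "{1..Suc j} - {Suc j} = {1..j}" by auto
  moreover have "(if c < Suc j then \<tau>(c := \<tau> (Suc j)) else \<tau>) x = ?g x" if "x \<in> {1..j}" for x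
    using that c(1) by (cases "x = c") (auto simp: Transposition.transpose_def)
  ultimately show ?thesis using bij_betw_cong[of "{1..j}"] by metis
qed

lemma sor_aux_cong:
  "bij_betw \<tau>' {1..j} {1..j} \<Longrightarrow> (\<And>i. i \<in> {1..j} \<Longrightarrow> \<tau> i = \<tau>' i \<and> y i = y' i)
    \<Longrightarrow> sor_aux r j \<tau> y = sor_aux r j \<tau>' y'"
proof (induction j arbitrary: \<tau> y \<tau>' y')
  case 0
  then show ?case by simp
next
  case (Suc j)
  have P: "(\<lambda>c. c \<in> {1..Suc j} \<and> \<tau> c = Suc j) = (\<lambda>c. c \<in> {1..Suc j} \<and> \<tau>' c = Suc j)"
    using Suc.prems by auto
  have ex: "\<exists>!c. c \<in> {1..Suc j} \<and> \<tau>' c = Suc j"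
  proof -
    have "Suc j \<in> \<tau>' ` {1..Suc j}" using Suc.prems(1) by (auto simp: bij_betw_def)
    then obtain c where "c \<in> {1..Suc j}" "\<tau>' c = Suc j" by auto
    moreover have "inj_on \<tau>' {1..Suc j}" using Suc.prems(1) by (simp add: bij_betw_def)
    ultimately show ?thesis by (auto simp: inj_on_def)
  qed
  define c where "c = (THE c. c \<in> {1..Suc j} \<and> \<tau> c = Suc j)"
  have c': "c = (THE c. c \<in> {1..Suc j} \<and> \<tau>' c = Suc j)" unfolding c_def P ..
  have c: "c \<in> {1..Suc j}" "\<tau>' c = Suc j" using theI'[OF ex] c' by auto
  have last: "\<tau> (Suc j) = \<tau>' (Suc j)" "y (Suc j) = y' (Suc j)"
    using Suc.prems(2)[of "Suc j"] by auto
  have yc: "y c = y' c" using Suc.prems(2) c by auto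
  let ?e = "(r - y c mod r) mod r"
  have "sor_aux r j (if c < Suc j then \<tau>(c := \<tau> (Suc j)) else \<tau>)
          (if c < Suc j then y(c := (y (Suc j) + r - ?e) mod r) else y)
      = sor_aux r j (if c < Suc j then \<tau>'(c := \<tau>' (Suc j)) else \<tau>')
          (if c < Suc j then y'(c := (y' (Suc j) + r - ?e) mod r) else y')"
    by (rule Suc.IH[OF bij_betw_sort_step[OF Suc.prems(1) c]]) (use Suc.prems(2) last in auto)
  then show ?case using yc unfolding sor_aux.simps Let_def c_def[symmetric] c'[symmetric] by simp
qed

locale top_sorting =
  fixes r m :: nat and p :: cperm and c e :: nat
  assumes pG: "p \<in> G r (Suc m)" and r: "1 \<le> r" and c_def: "c = inv (fst p) (Suc m)"
    and e_def: "e = neg_colour r (snd p c)"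
begin

definition p' where "p' = sort_top r (Suc m) p"

lemma perm: "fst p permutes {1..Suc m}"
  using G_memD(1)[OF pG] .

lemma c: "c \<in> {1..Suc m}" "fst p c = Suc m"
  using top_position[OF pG] c_def by auto

lemma p'_fst: "fst p' = (fst p)(c := fst p (Suc m), Suc m := Suc m)"
  by (simp add: p'_def sort_top_def c_def Let_def)

lemma p'_snd: "snd p' = (snd p)(c := (snd p (Suc m) + r - e) mod r, Suc m := 0)"
  by (simp add: p'_def sort_top_def c_def e_def Let_def)

lemma p'_in_G: "p' \<in> G r m"
proof (rule G_memI)
  have "fst p' = fst p \<circ> Transposition.transpose c (Suc m)"
    using c(2) by (simp add: p'_fst Fun.swap_def)
  moreover have "fst p \<circ> Transposition.transpose c (Suc m) permutes {1..Suc m}"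
    using c(1) by (intro permutes_compose[OF _ perm] permutes_swap_id) auto
  ultimately have "fst p' permutes {1..Suc m}" by simp
  then show "fst p' permutes {1..m}"
    by (rule permutes_superset) (auto simp: p'_fst)
  show "snd p' i < r" for i
    using r G_memD(2)[OF pG, of i] by (simp add: p'_snd)
  show "snd p' i = 0" if "i \<notin> {1..m}" for i
    using that c(1) G_memD(3)[OF pG, of i] by (cases "i = Suc m") (auto simp: p'_snd)
qed

lemma sor_sort_top:
  "sor r (Suc m) p = Suc m - c + (if e > 0 then 2 * (c - 1) + e else 0) + sor r m p'"
proof -
  have the_c: "(THE c. c \<in> {1..Suc m} \<and> fst p c = Suc m) = c"
  proof (rule the_equality)
    show "c' = c" if "c' \<in> {1..Suc m} \<and> fst p c' = Suc m" for c'
      using that c(2) permutes_eq_iff[OF perm, of c' c] by simp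
  qed (use c in simp)
  let ?\<tau> = "if c < Suc m then (fst p)(c := fst p (Suc m)) else fst p"
  let ?y = "if c < Suc m then (snd p)(c := (snd p (Suc m) + r - e) mod r) else snd p"
  have "sor_aux r m ?\<tau> ?y = sor r m p'"
    unfolding sor_def
  proof (rule sor_aux_cong)
    show "bij_betw (fst p') {1..m} {1..m}"
      using G_memD(1)[OF p'_in_G] by (rule permutes_imp_bij)
    show "?\<tau> i = fst p' i \<and> ?y i = snd p' i" if "i \<in> {1..m}" for i
      using that by (auto simp: p'_fst p'_snd)
  qed
  then show ?thesis
    unfolding sor_def sor_aux.simps Let_def the_c e_def neg_colour_def by simp
qed

lemma unsort_top_sort_top: "unsort_top r (Suc m) p' c e = p"
proof -
  have z: "snd p (Suc m) < r" "snd p c < r" using G_memD(2)[OF pG] by auto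
  have ec: "neg_colour r e = snd p c"
    using z(2) by (simp add: e_def neg_colour_neg_colour)
  have e: "e < r" using r by (simp add: e_def neg_colour_less)
  have "((snd p (Suc m) + r - e) mod r + e) mod r = (snd p (Suc m) + r - e + e) mod r"
    by (simp add: mod_add_left_eq)
  also have "\<dots> = snd p (Suc m)" using e z(1) by simp
  finally show ?thesis
    using ec c by (cases "c = Suc m") (auto intro!: prod_eqI simp: unsort_top_def p'_fst p'_snd fun_eq_iff)
qed

end

lemma unsort_top_in_G:
  assumes pG: "p \<in> G r m" and c: "c \<in> {1..Suc m}" and r: "1 \<le> r"
  shows "unsort_top r (Suc m) p c e \<in> G r (Suc m)"
proof (rule G_memI)
  have perm: "fst p permutes {1..Suc m}" using G_memD(1)[OF pG] by (rule permutes_subset) auto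
  have fn: "fst p (Suc m) = Suc m" using G_memD(1)[OF pG] by (simp add: permutes_not_in)
  have "fst (unsort_top r (Suc m) p c e) = fst p \<circ> Transposition.transpose c (Suc m)"
    using fn by (cases "c = Suc m") (simp_all add: unsort_top_def Fun.swap_def)
  moreover have "Transposition.transpose c (Suc m) permutes {1..Suc m}"
    using c by (intro permutes_swap_id) auto
  ultimately show "fst (unsort_top r (Suc m) p c e) permutes {1..Suc m}"
    using permutes_compose[OF _ perm] by simp
  show "snd (unsort_top r (Suc m) p c e) i < r" for i
    using G_memD(2)[OF pG, of i] r by (auto simp: unsort_top_def neg_colour_less)
  show "snd (unsort_top r (Suc m) p c e) i = 0" if "i \<notin> {1..Suc m}" for i
    using that c G_memD(3)[OF pG, of i] by (auto simp: unsort_top_def)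
qed

lemma unsort_top_colour: "snd (unsort_top r n p c e) c = neg_colour r e"
  by (simp add: unsort_top_def)

lemma unsort_top_position:
  assumes "p \<in> G r m" "c \<in> {1..Suc m}" "1 \<le> r"
  shows "inv (fst (unsort_top r (Suc m) p c e)) (Suc m) = c"
proof -
  have "fst p (Suc m) = Suc m" using G_memD(1)[OF assms(1)] by (simp add: permutes_not_in)
  then show ?thesis
    using permutes_inv_eq[OF G_memD(1)[OF unsort_top_in_G[OF assms]]]
    by (cases "c = Suc m") (simp_all add: unsort_top_def)
qed

lemma sort_top_unsort_top:
  assumes pG: "p \<in> G r m" and c: "c \<in> {1..Suc m}" and r: "1 \<le> r" and e: "e < r"
  shows "sort_top r (Suc m) (unsort_top r (Suc m) p c e) = p"
proof -
  have fn: "fst p (Suc m) = Suc m" using G_memD(1)[OF pG] by (simp add: permutes_not_in)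
  have sn: "snd p (Suc m) = 0" using G_memD(3)[OF pG] by simp
  have sc: "snd p c < r" using G_memD(2)[OF pG] .
  have "((snd p c + e) mod r + r - e) mod r = ((snd p c + e) mod r + (r - e)) mod r" using e by simp
  also have "\<dots> = (snd p c + e + (r - e)) mod r" by (simp add: mod_add_left_eq)
  also have "\<dots> = snd p c" using e sc by simp
  finally show ?thesis
    unfolding sort_top_def unsort_top_position[OF pG c r] Let_def
    using fn sn c neg_colour_neg_colour[OF e]
    by (cases p) (auto simp: unsort_top_def fun_eq_iff)
qed

section \<open>Orbits under skipping\<close>

text \<open>\<open>g\<close> follows \<open>f\<close> but jumps over the points satisfying \<open>P\<close>, which never occur twice in a
  row; \<open>skip_index k\<close> is the number of \<open>f\<close>-steps that the \<open>k\<close>-th iterate of \<open>g\<close> takes from \<open>s\<close>.\<close>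

definition prefix_minima :: "('a \<Rightarrow> nat) \<Rightarrow> ('a \<Rightarrow> 'a) \<Rightarrow> 'a \<Rightarrow> 'a set" where
  "prefix_minima \<mu> h s = {x. \<exists>k\<ge>1. x = (h ^^ k) s \<and> (\<forall>l. 1 \<le> l \<and> l < k \<longrightarrow> \<mu> x < \<mu> ((h ^^ l) s))}"

locale orbit_skipping =
  fixes f g :: "'a \<Rightarrow> 'a" and P :: "'a \<Rightarrow> bool" and s :: 'a
  assumes g_step: "\<And>x. \<not> P x \<Longrightarrow> g x = (if P (f x) then f (f x) else f x)"
    and not_twice: "\<And>x. \<not> P x \<Longrightarrow> P (f x) \<Longrightarrow> \<not> P (f (f x))"
    and start: "\<not> P s"
begin

fun skip_index :: "nat \<Rightarrow> nat" where
  "skip_index 0 = 0"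
| "skip_index (Suc k) = (if P ((f ^^ Suc (skip_index k)) s) then Suc (Suc (skip_index k)) else Suc (skip_index k))"

lemma funpow_g: "(g ^^ k) s = (f ^^ skip_index k) s \<and> \<not> P ((f ^^ skip_index k) s)"
proof (induction k)
  case 0
  then show ?case using start by simp
next
  case (Suc k)
  let ?x = "(f ^^ skip_index k) s"
  have "\<not> P ?x" "(g ^^ k) s = ?x" using Suc by auto
  then show ?case using g_step[of ?x] not_twice[of ?x] by (cases "P (f ?x)") simp_all
qed

lemma skip_index_strict_mono: "strict_mono skip_index"
  unfolding strict_mono_Suc_iff by simp

lemma skip_index_below:
  "j < skip_index k \<Longrightarrow> (\<exists>l<k. j = skip_index l) \<or> P ((f ^^ j) s)"
proof (induction k)
  case (Suc k)
  show ?case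
  proof (cases "j < skip_index k")
    case True
    then show ?thesis using Suc.IH less_SucI by blast
  next
    case False
    then have "j = skip_index k \<or> (j = Suc (skip_index k) \<and> P ((f ^^ Suc (skip_index k)) s))"
      using Suc.prems by (auto split: if_splits)
    then show ?thesis by auto
  qed
qed simp

lemma skip_index_obtain:
  assumes "\<not> P ((f ^^ n) s)"
  obtains k where "skip_index k = n"
proof -
  have "n < skip_index (Suc n)" using strict_mono_imp_increasing[OF skip_index_strict_mono, of "Suc n"] by simp
  then show thesis using skip_index_below[of n "Suc n"] assms that by blast
qed

lemma range_funpow_g: "{(g ^^ k) s | k. True} = {(f ^^ n) s | n. True} - Collect P"
proof
  show "{(g ^^ k) s | k. True} \<subseteq> {(f ^^ n) s | n. True} - Collect P"
    using funpow_g by auto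
  show "{(f ^^ n) s | n. True} - Collect P \<subseteq> {(g ^^ k) s | k. True}"
  proof
    fix x assume "x \<in> {(f ^^ n) s | n. True} - Collect P"
    then obtain n where n: "x = (f ^^ n) s" "\<not> P ((f ^^ n) s)" by auto
    obtain k where "skip_index k = n" using skip_index_obtain[OF n(2)] .
    then have "x = (g ^^ k) s" using funpow_g[of k] n(1) by simp
    then show "x \<in> {(g ^^ k) s | k. True}" by blast
  qed
qed


text \<open>If the skipped points are exactly those where \<open>\<mu>\<close> attains its maximum along the trajectory,
  skipping them does not affect the prefix minima, except that \<open>f s\<close> itself may be one.\<close>

context
  fixes \<mu> :: "'a \<Rightarrow> nat" and M :: nat
  assumes bounded: "\<And>k. \<mu> ((f ^^ k) s) \<le> M" and P_iff: "\<And>x. P x \<longleftrightarrow> \<mu> x = M"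
begin

lemma prefix_minima_g_subset: "prefix_minima \<mu> g s \<subseteq> prefix_minima \<mu> f s"
proof
  fix x assume "x \<in> prefix_minima \<mu> g s"
  then obtain k where k: "k \<ge> 1" "x = (g ^^ k) s" "\<forall>l. 1 \<le> l \<and> l < k \<longrightarrow> \<mu> x < \<mu> ((g ^^ l) s)"
    unfolding prefix_minima_def by blast
  have x: "x = (f ^^ skip_index k) s" "\<not> P x" using funpow_g[of k] k(2) by simp_all
  then have "\<mu> x < M" using bounded[of "skip_index k"] P_iff[of x] by simp
  have "\<mu> x < \<mu> ((f ^^ j) s)" if "1 \<le> j" "j < skip_index k" for j
    using skip_index_below[OF that(2)]
  proof
    assume "\<exists>l<k. j = skip_index l"
    then obtain l where l: "l < k" "j = skip_index l" by blast
    then have "l \<ge> 1" using that(1) by (cases l) auto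
    then show ?thesis using k(3)[rule_format, of l] l funpow_g[of l] by simp
  next
    assume "P ((f ^^ j) s)"
    then show ?thesis using \<open>\<mu> x < M\<close> P_iff by simp
  qed
  moreover have "skip_index k \<ge> 1" using k(1) by (cases k) auto
  ultimately show "x \<in> prefix_minima \<mu> f s" unfolding prefix_minima_def using x(1) by blast
qed

lemma prefix_minima_f_not_skipped:
  assumes x: "x \<in> prefix_minima \<mu> f s" "\<not> P x"
  shows "x \<in> prefix_minima \<mu> g s"
proof -
  obtain k where k: "k \<ge> 1" "x = (f ^^ k) s" "\<forall>l. 1 \<le> l \<and> l < k \<longrightarrow> \<mu> x < \<mu> ((f ^^ l) s)"
    using x(1) unfolding prefix_minima_def by blast
  obtain k' where k': "skip_index k' = k" using x(2) k(2) skip_index_obtain by blast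
  have "k' \<ge> 1" using k(1) k' by (cases k') auto
  moreover have "\<mu> x < \<mu> ((g ^^ l) s)" if "1 \<le> l" "l < k'" for l
  proof -
    have "1 \<le> skip_index l" using that(1) by (cases l) auto
    moreover have "skip_index l < k" using strict_mono_less[OF skip_index_strict_mono] that(2) k'[symmetric] by simp
    ultimately show ?thesis using k(3)[rule_format, of "skip_index l"] funpow_g[of l] by simp
  qed
  moreover have "x = (g ^^ k') s" using k(2) k' funpow_g[of k'] by simp
  ultimately show ?thesis unfolding prefix_minima_def by blast
qed

lemma prefix_minima_f_skipped:
  assumes x: "x \<in> prefix_minima \<mu> f s" "P x"
  shows "x = f s"
proof -
  obtain k where k: "k \<ge> 1" "x = (f ^^ k) s" "\<forall>l. 1 \<le> l \<and> l < k \<longrightarrow> \<mu> x < \<mu> ((f ^^ l) s)"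
    using x(1) unfolding prefix_minima_def by blast
  have "k = 1"
  proof (rule ccontr)
    assume "k \<noteq> 1"
    then have "\<mu> x < \<mu> ((f ^^ 1) s)" using k(1) k(3)[rule_format, of 1] by simp
    then show False using x(2) P_iff bounded[of 1] by simp
  qed
  then show ?thesis using k(2) by simp
qed

lemma prefix_minima_skip:
  "prefix_minima \<mu> f s = prefix_minima \<mu> g s \<union> (if P (f s) then {f s} else {})"
proof -
  have fs: "f s \<in> prefix_minima \<mu> f s" unfolding prefix_minima_def by (intro CollectI exI[of _ 1]) simp
  show ?thesis
  proof (rule set_eqI, rule iffI)
    fix x assume x: "x \<in> prefix_minima \<mu> f s"
    show "x \<in> prefix_minima \<mu> g s \<union> (if P (f s) then {f s} else {})"
    proof (cases "P x")
      case True
      then show ?thesis using prefix_minima_f_skipped[OF x True] by simp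
    next
      case False
      then show ?thesis using prefix_minima_f_not_skipped[OF x False] by simp
    qed
  next
    fix x assume "x \<in> prefix_minima \<mu> g s \<union> (if P (f s) then {f s} else {})"
    then show "x \<in> prefix_minima \<mu> f s" using prefix_minima_g_subset fs by (auto split: if_splits)
  qed
qed

end
end

lemma corbit_eq_orbit:
  assumes "\<sigma> permutes S" "finite S"
  shows "corbit \<sigma> i = orbit \<sigma> i"
proof -
  have "permutation \<sigma>" using assms by (auto simp: permutation_permutes)
  then show ?thesis unfolding corbit_def by (simp add: orbit_altdef_permutation)
qed

lemma self_in_orbit: "\<sigma> permutes S \<Longrightarrow> finite S \<Longrightarrow> i \<in> orbit \<sigma> i"
  by (rule permutation_self_in_orbit) (auto simp: permutation_permutes)

lemma orbit_eq_of_mem: "\<sigma> permutes S \<Longrightarrow> finite S \<Longrightarrow> b \<in> orbit \<sigma> a \<Longrightarrow> orbit \<sigma> b = orbit \<sigma> a"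
  by (metis cyclic_on_orbit orbit_cyclic_eq3)

lemma mod_neg_colour_add:
  fixes r :: nat
  assumes "z < r"
  shows "((y + r - neg_colour r z) mod r + x) mod r = (y + (z + x)) mod r"
proof (cases "z = 0")
  case True
  then show ?thesis by (simp add: neg_colour_def mod_add_left_eq)
next
  case False
  then have "y + r - neg_colour r z = y + z" using assms by (simp add: neg_colour_def)
  then show ?thesis by (simp add: mod_add_left_eq add.assoc)
qed

definition cycle_letter :: "nat \<Rightarrow> cperm \<Rightarrow> nat set \<Rightarrow> nat \<times> nat" where
  "cycle_letter r p B = (Min B, (\<Sum>k\<in>B. snd p k) mod r)"

lemma Cyc_eq_image: "Cyc r n p = (\<lambda>i. cycle_letter r p (orbit (fst p) i)) ` {1..n}" if "p \<in> G r n"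
  using corbit_eq_orbit[OF G_memD(1)[OF that]] by (auto simp: Cyc_def cycle_letter_def)

context top_sorting
begin

lemma top_position_iff: "fst p x = Suc m \<longleftrightarrow> x = c"
  by (metis c(2) permutes_eq_iff[OF perm])

lemma orbit_skipping_top:
  assumes "i \<noteq> Suc m"
  shows "orbit_skipping (fst p) (fst p') (\<lambda>x. x = Suc m) i"
proof
  show "i \<noteq> Suc m" by (rule assms)
  show "fst p' x = (if fst p x = Suc m then fst p (fst p x) else fst p x)" if "x \<noteq> Suc m" for x
    using that top_position_iff[of x] c(2) by (cases "x = c") (simp_all add: p'_fst)
  show "fst p (fst p x) \<noteq> Suc m" if "x \<noteq> Suc m" "fst p x = Suc m" for x
    using that top_position_iff[of x] top_position_iff[of "Suc m"] by simp
qed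

lemma orbit_sort_top:
  assumes "i \<noteq> Suc m"
  shows "orbit (fst p') i = orbit (fst p) i - {Suc m}"
proof -
  interpret orbit_skipping "fst p" "fst p'" "\<lambda>x. x = Suc m" i
    using orbit_skipping_top[OF assms] .
  have "corbit (fst p') i = corbit (fst p) i - {Suc m}"
    unfolding corbit_def using range_funpow_g by auto
  then show ?thesis
    using corbit_eq_orbit[OF perm] corbit_eq_orbit[OF G_memD(1)[OF p'_in_G]] by simp
qed

text \<open>Moving \<open>n\<close> out of its cycle changes neither the cycle minimum nor, thanks to the choice of
  the new colour at \<open>c\<close>, the colour sum of the cycle.\<close>

lemma colour_sum_sort_top:
  assumes fin: "finite B" and B: "c \<in> B \<longleftrightarrow> Suc m \<in> B" "Suc m \<in> B \<Longrightarrow> c \<noteq> Suc m"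
  shows "(\<Sum>k\<in>B - {Suc m}. snd p' k) mod r = (\<Sum>k\<in>B. snd p k) mod r"
proof (cases "Suc m \<in> B")
  case False
  then show ?thesis using B(1) by (auto simp: p'_snd intro!: arg_cong[where f = "\<lambda>x. x mod r"] sum.cong)
next
  case True
  then have cB: "c \<in> B - {Suc m}" "c \<noteq> Suc m" using B by auto
  let ?R = "B - {Suc m} - {c}"
  have "(\<Sum>k\<in>B - {Suc m}. snd p' k) = snd p' c + (\<Sum>k\<in>?R. snd p k)"
    using sum.remove[of "B - {Suc m}" c "snd p'"] fin cB by (simp add: p'_snd)
  also have "snd p' c = (snd p (Suc m) + r - e) mod r" using cB(2) by (simp add: p'_snd)
  finally have "(\<Sum>k\<in>B - {Suc m}. snd p' k) mod r = (snd p (Suc m) + (snd p c + (\<Sum>k\<in>?R. snd p k))) mod r"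
    using mod_neg_colour_add[OF G_memD(2)[OF pG, of c]] by (simp add: e_def mod_add_left_eq)
  also have "snd p (Suc m) + (snd p c + (\<Sum>k\<in>?R. snd p k)) = (\<Sum>k\<in>B. snd p k)"
    using sum.remove[OF fin True, of "snd p"] sum.remove[of "B - {Suc m}" c "snd p"] fin cB by simp
  finally show ?thesis .
qed

lemma cycle_letter_sort_top:
  assumes i: "i \<in> {1..m}"
  shows "cycle_letter r p' (orbit (fst p') i) = cycle_letter r p (orbit (fst p) i)"
proof -
  let ?O = "orbit (fst p) i"
  have iO: "i \<in> ?O" using self_in_orbit[OF perm] by simp
  have fin: "finite ?O" by (rule finite_orbit[OF iO])
  have O': "orbit (fst p') i = ?O - {Suc m}" using orbit_sort_top i by simp
  have "Min ?O \<in> ?O - {Suc m}" using Min_le[OF fin iO] Min_in[OF fin] iO i by auto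
  then have min: "Min (?O - {Suc m}) = Min ?O" using fin by (intro Min_eqI) auto
  have orbit_top: "orbit (fst p) (Suc m) = orbit (fst p) c"
    using orbit_eq_of_mem[OF perm _ orbit.base[of "fst p" c]] c(2) by simp
  have "c \<in> ?O \<longleftrightarrow> Suc m \<in> ?O"
  proof
    assume "c \<in> ?O"
    then show "Suc m \<in> ?O" using orbit.step[of c "fst p" i] c(2) by simp
  next
    assume "Suc m \<in> ?O"
    then have "orbit (fst p) (Suc m) = ?O" by (rule orbit_eq_of_mem[OF perm finite_atLeastAtMost])
    then show "c \<in> ?O" using orbit_top self_in_orbit[OF perm finite_atLeastAtMost, of c] by simp
  qed
  moreover have "c \<noteq> Suc m" if "Suc m \<in> ?O"
  proof
    assume "c = Suc m"
    then have "orbit (fst p') i = ?O" using c(2) by (auto simp: p'_fst fun_upd_idem)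
    then show False using O' that by blast
  qed
  ultimately have "(\<Sum>k\<in>?O - {Suc m}. snd p' k) mod r = (\<Sum>k\<in>?O. snd p k) mod r"
    by (intro colour_sum_sort_top fin)
  then show ?thesis using O' min by (simp add: cycle_letter_def)
qed

lemma Cyc_sort_top: "Cyc r (Suc m) p = Cyc r m p' \<union> (if c = Suc m then {(Suc m, snd p c)} else {})"
proof -
  let ?L = "\<lambda>q i. cycle_letter r q (orbit (fst q) i)"
  have "Cyc r (Suc m) p = ?L p ` {1..m} \<union> {?L p (Suc m)}"
    unfolding Cyc_eq_image[OF pG] by (auto simp: atLeastAtMostSuc_conv)
  also have "?L p ` {1..m} = Cyc r m p'"
    unfolding Cyc_eq_image[OF p'_in_G] using cycle_letter_sort_top by simp
  finally have Cyc: "Cyc r (Suc m) p = Cyc r m p' \<union> {?L p (Suc m)}" .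
  show ?thesis
  proof (cases "c = Suc m")
    case True
    then have "orbit (fst p) (Suc m) = {Suc m}" using c(2) orbit_eq_singleton_iff by metis
    then show ?thesis using Cyc True G_memD(2)[OF pG, of "Suc m"] by (simp add: cycle_letter_def)
  next
    case False
    then have "orbit (fst p) (Suc m) = orbit (fst p) c" "c \<in> {1..m}"
      using orbit_eq_of_mem[OF perm _ orbit.base[of "fst p" c]] c by auto
    then have "?L p (Suc m) \<in> Cyc r m p'"
      unfolding Cyc_eq_image[OF p'_in_G] using cycle_letter_sort_top by force
    then show ?thesis using Cyc False by auto
  qed
qed

end

section \<open>Left-to-right minima of the cycle of \<open>1\<close>\<close>

lemma funpow_mem: "f ` D \<subseteq> D \<Longrightarrow> x \<in> D \<Longrightarrow> (f ^^ k) x \<in> D"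
  by (induction k) auto

lemma funpow_inj_on:
  assumes "f ` D \<subseteq> D" "inj_on f D" "x \<in> D" "y \<in> D" "(f ^^ k) x = (f ^^ k) y"
  shows "x = y"
  using assms(3-)
proof (induction k arbitrary: x y)
  case (Suc k)
  have "(f ^^ k) (f x) = (f ^^ k) (f y)" using Suc.prems(3) by (simp add: funpow_swap1)
  then have "f x = f y" using Suc.IH[of "f x" "f y"] Suc.prems assms(1) by auto
  then show ?case using assms(2) Suc.prems by (auto simp: inj_on_def)
qed simp

lemma funpow_returns:
  assumes "finite D" "f ` D \<subseteq> D" "inj_on f D" "s \<in> D"
  obtains M where "M \<ge> 1" "(f ^^ M) s = s"
proof -
  have "range (\<lambda>k. (f ^^ k) s) \<subseteq> D" using funpow_mem[OF assms(2,4)] by auto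
  then have "finite (range (\<lambda>k. (f ^^ k) s))" using assms(1) finite_subset by blast
  then have "\<not> inj (\<lambda>k::nat. (f ^^ k) s)" using finite_imageD[of _ UNIV] by auto
  then obtain a b where "a \<noteq> b" "(f ^^ a) s = (f ^^ b) s" unfolding inj_def by blast
  then obtain u v where uv: "u < v" "(f ^^ u) s = (f ^^ v) s" by (metis linorder_neqE_nat)
  have "(f ^^ u) ((f ^^ (v - u)) s) = (f ^^ (u + (v - u))) s" by (simp only: funpow_add o_apply)
  then have "(f ^^ u) ((f ^^ (v - u)) s) = (f ^^ u) s" using uv by simp
  then have "(f ^^ (v - u)) s = s"
    using funpow_inj_on[OF assms(2,3) funpow_mem[OF assms(2,4)] assms(4)] by blast
  then show thesis using uv(1) that[of "v - u"] by simp
qed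

lemma cact_maps_to:
  assumes "p \<in> G r n" "1 \<le> r"
  shows "cact r p ` ({1..n} \<times> {0..<r}) \<subseteq> {1..n} \<times> {0..<r}"
proof
  fix y assume "y \<in> cact r p ` ({1..n} \<times> {0..<r})"
  then obtain a t where "a \<in> {1..n}" "y = cact r p (a, t)" by auto
  then show "y \<in> {1..n} \<times> {0..<r}"
    using permutes_in_image[OF G_memD(1)[OF assms(1)], of a] assms(2) by (simp add: cact_def)
qed

lemma mod_add_left_cancel_less:
  fixes u t t' r :: nat
  assumes "t < r" "t' < r" "(u + t) mod r = (u + t') mod r"
  shows "t = t'"
proof -
  have "a = b" if "a \<le> b" "b < r" "(u + a) mod r = (u + b) mod r" for a b :: nat
  proof -
    have "r dvd (u + b) - (u + a)" using that mod_eq_dvd_iff_nat[of "u + a" "u + b" r] by simp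
    then have "r dvd b - a" by simp
    then have "b - a = 0" using that(2) by (metis diff_le_self dvd_imp_le not_le order.strict_trans2 zero_less_iff_neq_zero)
    then show ?thesis using that(1) by simp
  qed
  then show ?thesis using assms by (metis nat_le_linear)
qed

lemma cact_inj_on:
  assumes "p \<in> G r n"
  shows "inj_on (cact r p) ({1..n} \<times> {0..<r})"
proof (rule inj_onI)
  fix x y assume x: "x \<in> {1..n} \<times> {0..<r}" and y: "y \<in> {1..n} \<times> {0..<r}"
    and e: "cact r p x = cact r p y"
  obtain a t b u where ab: "x = (a, t)" "y = (b, u)" by (cases x, cases y)
  have "fst p a = fst p b" "(snd p a + t) mod r = (snd p b + u) mod r"
    using e by (simp_all add: cact_def ab)
  moreover from this(1) have "a = b" using permutes_eq_iff[OF G_memD(1)[OF assms], of a b] by blast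
  ultimately have "t = u" using x y ab mod_add_left_cancel_less[of t r u "snd p a"] by simp
  then show "x = y" using ab \<open>a = b\<close> by simp
qed

lemma cact_funpow_mem:
  assumes "p \<in> G r n" "1 \<le> r" "1 \<le> n"
  shows "(cact r p ^^ k) (1, 0) \<in> {1..n} \<times> {0..<r}"
  by (rule funpow_mem[OF cact_maps_to[OF assms(1,2)]]) (use assms(2,3) in simp)

text \<open>The cycle of \<open>1\<^sup>[0\<^sup>]\<close> returns to \<open>1\<^sup>[0\<^sup>]\<close>, and nothing after that return can be a new
  minimum, so the bound \<open>k \<le> m\<close> in the definition of \<open>Lmic\<close> may be dropped.\<close>

lemma Lmic_char:
  assumes pG: "p \<in> G r n" and r: "1 \<le> r" and n: "1 \<le> n"
  shows "Lmic r p = prefix_minima fst (cact r p) (1, 0)"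
proof -
  let ?f = "cact r p"
  have "finite ({1..n} \<times> {0..<r})" "(1, 0) \<in> {1..n} \<times> {0..<r}" using n r by auto
  then obtain M where "M \<ge> 1" "(?f ^^ M) (1, 0) = (1, 0)"
    using funpow_returns[OF _ cact_maps_to[OF pG r] cact_inj_on[OF pG]] by metis
  then have "\<exists>m. 1 \<le> m \<and> (?f ^^ m) (1, 0) = (1, 0)" by blast
  note m0 = LeastI_ex[OF this]
  have "k \<le> (LEAST m. 1 \<le> m \<and> (?f ^^ m) (1, 0) = (1, 0))"
    if "\<forall>l. 1 \<le> l \<and> l < k \<longrightarrow> fst ((?f ^^ k) (1, 0)) < fst ((?f ^^ l) (1, 0))" for k
  proof (rule ccontr)
    assume "\<not> ?thesis"
    then have "fst ((?f ^^ k) (1, 0)) < 1" using that m0 by fastforce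
    then show False using cact_funpow_mem[OF pG r n, of k] by auto
  qed
  then show ?thesis unfolding Lmic_def prefix_minima_def Let_def by blast
qed

context top_sorting
begin

lemma orbit_skipping_cact:
  assumes m: "1 \<le> m"
  shows "orbit_skipping (cact r p) (cact r p') (\<lambda>x. fst x = Suc m) (1, 0)"
proof
  fix x :: "nat \<times> nat" assume nP: "fst x \<noteq> Suc m"
  obtain a t where x: "x = (a, t)" by (cases x)
  show "cact r p' x = (if fst (cact r p x) = Suc m then cact r p (cact r p x) else cact r p x)"
  proof (cases "a = c")
    case True
    then have "c \<noteq> Suc m" using nP x by simp
    moreover have "((snd p (Suc m) + r - e) mod r + t) mod r = (snd p (Suc m) + (snd p c + t) mod r) mod r"
      unfolding e_def mod_neg_colour_add[OF G_memD(2)[OF pG]] by (simp add: mod_add_right_eq)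
    ultimately show ?thesis using True x c by (simp add: cact_def p'_fst p'_snd)
  next
    case False
    then show ?thesis using top_position_iff[of a] x nP by (simp add: cact_def p'_fst p'_snd)
  qed
next
  fix x :: "nat \<times> nat" assume "fst x \<noteq> Suc m" "fst (cact r p x) = Suc m"
  then show "fst (cact r p (cact r p x)) \<noteq> Suc m"
    using top_position_iff[of "fst x"] top_position_iff[of "Suc m"] by (simp add: cact_def)
next
  show "fst (1::nat, 0::nat) \<noteq> Suc m" using m by simp
qed

lemma Lmic_sort_top:
  assumes m: "1 \<le> m"
  shows "Lmic r p = Lmic r p' \<union> (if c = 1 then {(Suc m, snd p c)} else {})"
proof -
  interpret orbit_skipping "cact r p" "cact r p'" "\<lambda>x. fst x = Suc m" "(1, 0)"
    using orbit_skipping_cact[OF m] .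
  have "fst ((cact r p ^^ k) (1, 0)) \<le> Suc m" for k
    using cact_funpow_mem[OF pG r, of k] by (simp add: mem_Times_iff)
  then have "prefix_minima fst (cact r p) (1, 0) = prefix_minima fst (cact r p') (1, 0)
      \<union> (if fst (cact r p (1, 0)) = Suc m then {cact r p (1, 0)} else {})"
    by (intro prefix_minima_skip) auto
  moreover have "1 \<le> Suc m" by simp
  ultimately have "Lmic r p = Lmic r p' \<union> (if fst (cact r p (1, 0)) = Suc m then {cact r p (1, 0)} else {})"
    by (simp only: Lmic_char[OF pG r] Lmic_char[OF p'_in_G r m])
  moreover have "cact r p (1, 0) = (fst p 1, snd p 1)" using G_memD(2)[OF pG, of 1] by (simp add: cact_def)
  moreover have "fst p 1 = Suc m \<longleftrightarrow> c = 1" using top_position_iff[of 1] by auto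
  ultimately show ?thesis using c(2) by (cases "c = 1") simp_all
qed
end

lemma Lmic_G_one:
  assumes qG: "q \<in> G r 1" and r: "1 \<le> r"
  shows "Lmic r q = {(1, snd q 1)}"
proof -
  let ?F = "\<lambda>k. (cact r q ^^ k) (1, 0)"
  have one: "fst (?F k) = 1" for k
    using cact_funpow_mem[OF qG r, of k] by (simp add: mem_Times_iff)
  have F1: "?F 1 = (1, snd q 1)"
    using permutes_in_image[OF G_memD(1)[OF qG], of 1] G_memD(2)[OF qG, of 1] by (simp add: cact_def)
  show ?thesis unfolding Lmic_char[OF qG r order.refl]
  proof (rule set_eqI, rule iffI)
    fix x assume "x \<in> prefix_minima fst (cact r q) (1, 0)"
    then obtain k where k: "k \<ge> 1" "x = ?F k" "\<forall>l. 1 \<le> l \<and> l < k \<longrightarrow> fst x < fst (?F l)"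
      unfolding prefix_minima_def by blast
    have "k = 1"
    proof (rule ccontr)
      assume "k \<noteq> 1"
      then show False using k(1,2) k(3)[rule_format, of 1] one[of k] one[of 1] by simp
    qed
    then show "x \<in> {(1, snd q 1)}" using k(2) F1 by simp
  next
    fix x :: "nat \<times> nat" assume "x \<in> {(1, snd q 1)}"
    then show "x \<in> prefix_minima fst (cact r q) (1, 0)"
      unfolding prefix_minima_def using F1 by (intro CollectI exI[of _ 1]) simp
  qed
qed

lemma (in top_sorting) lr_maxima_sort_top:
  "lr_maxima (Suc m) p = {x \<in> lr_maxima m p'. fst (fst x) < c} \<union> {((c, Suc m), snd p c)}"
  using c by (intro lr_maxima_top[OF pG]) (auto simp: p'_fst p'_snd)

section \<open>The bijection\<close>

fun Phi :: "nat \<Rightarrow> nat \<Rightarrow> cperm \<Rightarrow> cperm" where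
  "Phi r 0 p = cone"
| "Phi r (Suc m) p = (let c = inv (fst p) (Suc m) in
     unsort_top r (Suc m) (Phi r m (del_top (Suc m) p)) c (snd p c))"

fun Phi_inv :: "nat \<Rightarrow> nat \<Rightarrow> cperm \<Rightarrow> cperm" where
  "Phi_inv r 0 p = cone"
| "Phi_inv r (Suc m) p = (let c = inv (fst p) (Suc m) in
     ins_top (Suc m) (Phi_inv r m (sort_top r (Suc m) p)) c (neg_colour r (snd p c)))"

declare Phi.simps(2) [simp del] Phi_inv.simps(2) [simp del]

lemma Phi_in_G: "1 \<le> r \<Longrightarrow> p \<in> G r n \<Longrightarrow> Phi r n p \<in> G r n"
proof (induction n arbitrary: p)
  case 0
  then show ?case using cone_in_G by simp
next
  case (Suc m)
  then show ?case
    using unsort_top_in_G[OF Suc.IH[OF _ del_top_in_G] top_position(1)] by (simp add: Phi.simps(2) Let_def)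
qed

lemma Phi_inv_in_G: "1 \<le> r \<Longrightarrow> p \<in> G r n \<Longrightarrow> Phi_inv r n p \<in> G r n"
proof (induction n arbitrary: p)
  case 0
  then show ?case using cone_in_G by simp
next
  case (Suc m)
  interpret top_sorting r m p "inv (fst p) (Suc m)" "neg_colour r (snd p (inv (fst p) (Suc m)))"
    using Suc.prems by unfold_locales auto
  show ?case
    using ins_top_in_G[OF Suc.IH[OF Suc.prems(1) p'_in_G] c(1) neg_colour_less[OF Suc.prems(1)]]
    by (simp add: Phi_inv.simps(2) Let_def p'_def)
qed

lemma Phi_inv_Phi: "1 \<le> r \<Longrightarrow> p \<in> G r n \<Longrightarrow> Phi_inv r n (Phi r n p) = p"
proof (induction n arbitrary: p)
  case 0
  then show ?case using G_zero[OF "0.prems"(2)] by simp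
next
  case (Suc m)
  define c z Q where "c = inv (fst p) (Suc m)" and "z = snd p c"
    and "Q = Phi r m (del_top (Suc m) p)"
  have c: "c \<in> {1..Suc m}" using top_position[OF Suc.prems(2)] by (simp add: c_def)
  have z: "z < r" using G_memD(2)[OF Suc.prems(2)] by (simp add: z_def)
  have QG: "Q \<in> G r m" unfolding Q_def using Phi_in_G[OF Suc.prems(1) del_top_in_G[OF Suc.prems(2)]] .
  have "Phi r (Suc m) p = unsort_top r (Suc m) Q c z" by (simp add: Phi.simps(2) Let_def Q_def c_def z_def)
  also have "Phi_inv r (Suc m) \<dots> = ins_top (Suc m) (Phi_inv r m Q) c z"
    using unsort_top_position[OF QG c Suc.prems(1)] sort_top_unsort_top[OF QG c Suc.prems(1) z]
      unsort_top_colour neg_colour_neg_colour[OF z] by (simp add: Phi_inv.simps(2) Let_def)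
  also have "Phi_inv r m Q = del_top (Suc m) p"
    unfolding Q_def using Suc.IH[OF Suc.prems(1) del_top_in_G[OF Suc.prems(2)]] .
  finally show ?case using ins_top_del_top[OF Suc.prems(2)] by (simp add: c_def z_def)
qed

lemma Phi_Phi_inv: "1 \<le> r \<Longrightarrow> p \<in> G r n \<Longrightarrow> Phi r n (Phi_inv r n p) = p"
proof (induction n arbitrary: p)
  case 0
  then show ?case using G_zero[OF "0.prems"(2)] by simp
next
  case (Suc m)
  define c e where "c = inv (fst p) (Suc m)" and "e = neg_colour r (snd p c)"
  interpret top_sorting r m p c e using Suc.prems by unfold_locales (auto simp: c_def e_def)
  define Q where "Q = Phi_inv r m p'"
  have e: "e < r" using neg_colour_less[OF r] by (simp add: e_def)
  have QG: "Q \<in> G r m" unfolding Q_def using Phi_inv_in_G[OF r p'_in_G] .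
  have "Phi_inv r (Suc m) p = ins_top (Suc m) Q c e"
    by (simp add: Phi_inv.simps(2) Let_def Q_def c_def e_def p'_def)
  also have "Phi r (Suc m) \<dots> = unsort_top r (Suc m) (Phi r m Q) c e"
    using ins_top_position[OF QG c(1) e] del_top_ins_top[OF QG c(1) e]
    by (simp add: Phi.simps(2) Let_def ins_top_def)
  also have "Phi r m Q = p'" unfolding Q_def using Suc.IH[OF r p'_in_G] .
  finally show ?case using unsort_top_sort_top by simp
qed

lemma bij_betw_Phi: "1 \<le> r \<Longrightarrow> bij_betw (Phi r n) (G r n) (G r n)"
  by (rule bij_betw_byWitness[of _ "Phi_inv r n"]) (auto simp: Phi_inv_Phi Phi_Phi_inv Phi_in_G Phi_inv_in_G)

lemma Phi_Suc:
  assumes pG: "p \<in> G r (Suc m)" and r: "1 \<le> r"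
  defines "c \<equiv> inv (fst p) (Suc m)"
  shows "top_sorting r m (Phi r (Suc m) p) c (snd p c)"
    and "sort_top r (Suc m) (Phi r (Suc m) p) = Phi r m (del_top (Suc m) p)"
    and "snd (Phi r (Suc m) p) c = neg_colour r (snd p c)"
proof -
  let ?Q = "Phi r m (del_top (Suc m) p)"
  have QG: "?Q \<in> G r m" using Phi_in_G[OF r del_top_in_G[OF pG]] .
  have c: "c \<in> {1..Suc m}" using top_position[OF pG] by (simp add: c_def)
  have z: "snd p c < r" using G_memD(2)[OF pG] .
  have q: "Phi r (Suc m) p = unsort_top r (Suc m) ?Q c (snd p c)" by (simp add: Phi.simps(2) Let_def c_def)
  show colour: "snd (Phi r (Suc m) p) c = neg_colour r (snd p c)" unfolding q by (rule unsort_top_colour)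
  show "top_sorting r m (Phi r (Suc m) p) c (snd p c)"
    unfolding q using unsort_top_in_G[OF QG c r] unsort_top_position[OF QG c r] r
      colour[unfolded q] neg_colour_neg_colour[OF z]
    by unfold_locales simp_all
  show "sort_top r (Suc m) (Phi r (Suc m) p) = ?Q"
    unfolding q by (rule sort_top_unsort_top[OF QG c r z])
qed

definition neg_colours :: "nat \<Rightarrow> ('a \<times> nat) set \<Rightarrow> ('a \<times> nat) set" where
  "neg_colours r S = (\<lambda>(a, t). (a, neg_colour r t)) ` S"

lemma neg_colours_Un: "neg_colours r (A \<union> B) = neg_colours r A \<union> neg_colours r B"
  by (simp add: neg_colours_def image_Un)

lemma neg_colours_insert: "neg_colours r (insert (a, t) A) = insert (a, neg_colour r t) (neg_colours r A)"
  by (simp add: neg_colours_def)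

lemma neg_colours_empty: "neg_colours r {} = {}"
  by (simp add: neg_colours_def)

lemma invlen_Phi: "1 \<le> r \<Longrightarrow> p \<in> G r n \<Longrightarrow> invlen n p = sor r n (Phi r n p)"
proof (induction n arbitrary: p)
  case 0
  then show ?case by (simp add: invlen_def inversions_def sor_def)
next
  case (Suc m)
  define c where "c = inv (fst p) (Suc m)"
  interpret L: top_deletion r m p c using Suc.prems by unfold_locales (simp_all add: c_def)
  interpret S: top_sorting r m "Phi r (Suc m) p" c "snd p c"
    using Phi_Suc(1)[OF Suc.prems(2,1)] by (simp add: c_def)
  have "S.p' = Phi r m L.p'" by (simp only: S.p'_def L.p'_def Phi_Suc(2)[OF Suc.prems(2,1)])
  then show ?case
    using L.invlen_del_top S.sor_sort_top Suc.IH[OF Suc.prems(1) L.p'_in_G] L.c(1) by auto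
qed

lemma Rmil_Phi: "1 \<le> r \<Longrightarrow> p \<in> G r n \<Longrightarrow> Rmil n p = neg_colours r (Cyc r n (Phi r n p))"
proof (induction n arbitrary: p)
  case 0
  then show ?case by (simp add: Rmil_def Cyc_def neg_colours_def)
next
  case (Suc m)
  define c where "c = inv (fst p) (Suc m)"
  interpret L: top_deletion r m p c using Suc.prems by unfold_locales (simp_all add: c_def)
  interpret S: top_sorting r m "Phi r (Suc m) p" c "snd p c"
    using Phi_Suc(1)[OF Suc.prems(2,1)] by (simp add: c_def)
  have "S.p' = Phi r m L.p'" by (simp only: S.p'_def L.p'_def Phi_Suc(2)[OF Suc.prems(2,1)])
  then show ?case
    using L.Rmil_del_top S.Cyc_sort_top[unfolded Phi_Suc(3)[OF Suc.prems(2,1), folded c_def]]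
      Suc.IH[OF Suc.prems(1) L.p'_in_G] neg_colour_neg_colour[OF G_memD(2)[OF Suc.prems(2)]]
    by (simp add: neg_colours_Un neg_colours_insert neg_colours_empty)
qed

lemma Lmil_Phi: "1 \<le> r \<Longrightarrow> p \<in> G r n \<Longrightarrow> 1 \<le> n \<Longrightarrow> Lmil n p = neg_colours r (Lmic r (Phi r n p))"
proof (induction n arbitrary: p)
  case 0
  then show ?case by simp
next
  case (Suc m)
  define c where "c = inv (fst p) (Suc m)"
  interpret L: top_deletion r m p c using Suc.prems by unfold_locales (simp_all add: c_def)
  interpret S: top_sorting r m "Phi r (Suc m) p" c "snd p c"
    using Phi_Suc(1)[OF Suc.prems(2,1)] by (simp add: c_def)
  have p': "S.p' = Phi r m L.p'" by (simp only: S.p'_def L.p'_def Phi_Suc(2)[OF Suc.prems(2,1)])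
  note colour = Phi_Suc(3)[OF Suc.prems(2,1), folded c_def]
  note neg_neg = neg_colour_neg_colour[OF G_memD(2)[OF Suc.prems(2)]]
  show ?case
  proof (cases "m = 0")
    case True
    then have "c = 1" "Lmil m L.p' = {}" using L.c(1) by (auto simp: Lmil_def)
    moreover have "Lmic r (Phi r (Suc m) p) = {(1, neg_colour r (snd p c))}"
      using Lmic_G_one[OF S.pG[unfolded True, folded One_nat_def] S.r] colour \<open>c = 1\<close> True by simp
    ultimately show ?thesis
      using L.Lmil_del_top neg_neg True by (simp add: neg_colours_insert neg_colours_empty)
  next
    case False
    then show ?thesis
      using L.Lmil_del_top S.Lmic_sort_top[unfolded colour] p' Suc.IH[OF Suc.prems(1) L.p'_in_G] neg_neg
      by (simp add: neg_colours_Un neg_colours_insert neg_colours_empty)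
  qed
qed

lemma lr_maxima_Phi:
  "1 \<le> r \<Longrightarrow> p \<in> G r n \<Longrightarrow> lr_maxima n p = neg_colours r (lr_maxima n (Phi r n p))"
proof (induction n arbitrary: p)
  case 0
  then show ?case by (simp add: lr_maxima_def neg_colours_def)
next
  case (Suc m)
  define c where "c = inv (fst p) (Suc m)"
  interpret L: top_deletion r m p c using Suc.prems by unfold_locales (simp_all add: c_def)
  interpret S: top_sorting r m "Phi r (Suc m) p" c "snd p c"
    using Phi_Suc(1)[OF Suc.prems(2,1)] by (simp add: c_def)
  have "S.p' = Phi r m L.p'" by (simp only: S.p'_def L.p'_def Phi_Suc(2)[OF Suc.prems(2,1)])
  moreover have "neg_colours r {x \<in> A. fst (fst x) < c} = {x \<in> neg_colours r A. fst (fst x) < c}"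
    for A :: "((nat \<times> nat) \<times> nat) set" by (auto simp: neg_colours_def)
  ultimately show ?case
    using L.lr_maxima_del_top S.lr_maxima_sort_top Suc.IH[OF Suc.prems(1) L.p'_in_G]
      Phi_Suc(3)[OF Suc.prems(2,1), folded c_def] neg_colour_neg_colour[OF G_memD(2)[OF Suc.prems(2)]]
    by (simp add: neg_colours_Un neg_colours_insert)
qed

lemma image_neg_colours: "(\<lambda>(a, t). (f a, t)) ` neg_colours r S = neg_colours r ((\<lambda>(a, t). (f a, t)) ` S)"
  by (simp add: neg_colours_def image_image case_prod_beta)

lemma colsec_neg_colours:
  assumes S: "\<forall>x\<in>S. snd x < r" and t: "t < r"
  shows "colsec (neg_colours r S) t = colsec S ((r - t) mod r)"
proof -
  have neg_t: "(r - t) mod r = neg_colour r t" using t by (simp add: neg_colour_def)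
  have "(k, t) \<in> neg_colours r S \<longleftrightarrow> (k, neg_colour r t) \<in> S" for k
  proof
    assume "(k, t) \<in> neg_colours r S"
    then obtain u where u: "(k, u) \<in> S" "t = neg_colour r u" by (auto simp: neg_colours_def)
    then show "(k, neg_colour r t) \<in> S" using S neg_colour_neg_colour[of u r] by auto
  next
    assume "(k, neg_colour r t) \<in> S"
    then have "(\<lambda>(a, u). (a, neg_colour r u)) (k, neg_colour r t) \<in> neg_colours r S"
      unfolding neg_colours_def by (rule imageI)
    then show "(k, t) \<in> neg_colours r S" using neg_colour_neg_colour[OF t] by simp
  qed
  then show ?thesis by (simp add: colsec_def neg_t)
qed

lemma map_colsec_neg_colours:
  "\<forall>x\<in>S. snd x < r \<Longrightarrow>
    map (\<lambda>t. colsec S ((r - t) mod r)) [0..<r] = map (\<lambda>t. colsec (neg_colours r S) t) [0..<r]"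
  by (simp add: colsec_neg_colours)

lemma Lmic_colours_less:
  assumes "q \<in> G r n" "1 \<le> r" "1 \<le> n"
  shows "\<forall>x\<in>Lmic r q. snd x < r"
proof
  fix x assume "x \<in> Lmic r q"
  then obtain k where "x = (cact r q ^^ k) (1, 0)" unfolding Lmic_char[OF assms] prefix_minima_def by blast
  then show "snd x < r" using cact_funpow_mem[OF assms, of k] by (simp add: mem_Times_iff)
qed

definition length_statistics :: "nat \<Rightarrow> nat \<Rightarrow> cperm \<Rightarrow> _" where
  "length_statistics r n p =
     (clength r n p,
      map (\<lambda>t. colsec (Rmil n p) t) [0..<r],
      map (\<lambda>t. colsec (Lmil n p) t) [0..<r],
      map (\<lambda>t. colsec (Lmal n p) t) [0..<r],
      map (\<lambda>t. colsec (Lmap n p) t) [0..<r])"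

definition sorting_statistics :: "nat \<Rightarrow> nat \<Rightarrow> cperm \<Rightarrow> _" where
  "sorting_statistics r n p =
     (sor r n p,
      map (\<lambda>t. colsec (Cyc r n p) ((r - t) mod r)) [0..<r],
      map (\<lambda>t. colsec (Lmic r p) ((r - t) mod r)) [0..<r],
      map (\<lambda>t. colsec (Lmal n p) ((r - t) mod r)) [0..<r],
      map (\<lambda>t. colsec (Lmap n p) ((r - t) mod r)) [0..<r])"

lemma sorting_statistics_Phi:
  assumes r: "1 \<le> r" and n: "1 \<le> n" and pG: "p \<in> G r n"
  shows "sorting_statistics r n (Phi r n p) = length_statistics r n p"
proof -
  define q where "q = Phi r n p"
  have qG: "q \<in> G r n" unfolding q_def using Phi_in_G[OF r pG] .
  have Lmal: "Lmal n p = neg_colours r (Lmal n q)" and Lmap: "Lmap n p = neg_colours r (Lmap n q)"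
    unfolding Lmal_eq_image Lmap_eq_image lr_maxima_Phi[OF r pG, folded q_def] image_neg_colours
    by simp_all
  have "\<forall>x\<in>Lmal n q. snd x < r" "\<forall>x\<in>Lmap n q. snd x < r" "\<forall>x\<in>Cyc r n q. snd x < r"
    using G_memD(2)[OF qG] r by (auto simp: Lmal_def Lmap_def Cyc_def)
  note colours = this Lmic_colours_less[OF qG r n]
  have "sor r n q = clength r n p"
    using clength_eq_invlen[OF r pG] invlen_Phi[OF r pG] by (simp add: q_def)
  moreover note map_colsec_neg_colours[OF colours(3), folded Rmil_Phi[OF r pG, folded q_def]]
    map_colsec_neg_colours[OF colours(4), folded Lmil_Phi[OF r pG n, folded q_def]]
    map_colsec_neg_colours[OF colours(1), folded Lmal]
    map_colsec_neg_colours[OF colours(2), folded Lmap]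
  ultimately show ?thesis unfolding sorting_statistics_def length_statistics_def q_def by (simp only:)
qed

lemma card_fibres_bij_betw:
  assumes f: "bij_betw f A B" and gh: "\<And>x. x \<in> A \<Longrightarrow> g (f x) = h x"
  shows "card {x \<in> A. h x = v} = card {y \<in> B. g y = v}"
proof -
  have "{y \<in> B. g y = v} = f ` {x \<in> A. h x = v}"
    using gh bij_betw_imp_surj_on[OF f] by auto
  moreover have "inj_on f {x \<in> A. h x = v}"
    using bij_betw_imp_inj_on[OF f] by (rule inj_on_subset) auto
  ultimately show ?thesis by (simp add: card_image)
qed

theorem corollary4p2:
  fixes r n :: nat
  assumes "1 \<le> r" and "1 \<le> n"
  shows "\<forall>v. card {p \<in> G r n.
              (clength r n p,
               map (\<lambda>t. colsec (Rmil n p) t) [0..<r],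
               map (\<lambda>t. colsec (Lmil n p) t) [0..<r],
               map (\<lambda>t. colsec (Lmal n p) t) [0..<r],
               map (\<lambda>t. colsec (Lmap n p) t) [0..<r]) = v}
          = card {p \<in> G r n.
              (sor r n p,
               map (\<lambda>t. colsec (Cyc r n p) ((r - t) mod r)) [0..<r],
               map (\<lambda>t. colsec (Lmic r p) ((r - t) mod r)) [0..<r],
               map (\<lambda>t. colsec (Lmal n p) ((r - t) mod r)) [0..<r],
               map (\<lambda>t. colsec (Lmap n p) ((r - t) mod r)) [0..<r]) = v}"
  unfolding length_statistics_def[symmetric] sorting_statistics_def[symmetric]
  by (intro allI card_fibres_bij_betw[OF bij_betw_Phi[OF assms(1)]] sorting_statistics_Phi[OF assms])

end
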